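(* Let $p$ be an odd prime, $S$ a finite $p$-group and $\mathcal{F}$ a saturated fusion system on $S$. Let $E_1$ and $E_2$ be distinct $\mathcal{F}$-essential subgroups of $S$ with $N_S(E_1)=N_S(E_2)$, and set $T=\mathrm{core}_{\mathcal{F}}(E_1,E_2)$. Suppose that: (1) $E_1$, $E_2$ and $T$ have rank at most $3$; (2) $O^{p'}(\mathrm{Out}_{\mathcal{F}}(E_1))\cong\mathrm{SL}_2(p)$ and it centralizes $T$; (3) there exists a subgroup $V$ with $T\le V\le E_1$ that is $\mathcal{F}$-characteristic in $E_1$, has sectional rank at most $3$, is contained in $C_{E_1}(T)T$, and is such that $V/T$ is a natural $\mathrm{SL}_2(p)$-module for $O^{p'}(\mathrm{Out}_{\mathcal{F}}(E_1))$. Then $T$ is abelian, $T\le Z(V)$, $|[V,V]|\le p$, and $T/[V,V]$ is cyclic.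
   Context: Rank: minimal size of a generating set; sectional rank at most $k$ means all subgroups have rank at most $k$. For $P\le S$, $\mathrm{Aut}_{\mathcal{F}}(P)=\mathrm{Hom}_{\mathcal{F}}(P,P)$, $\mathrm{Out}_{\mathcal{F}}(P)=\mathrm{Aut}_{\mathcal{F}}(P)/\mathrm{Inn}(P)$, $P^{\mathcal{F}}=\{P\alpha:\alpha\in\mathrm{Hom}_{\mathcal{F}}(P,S)\}$. $E\le S$ is $\mathcal{F}$-essential if $C_S(P)\le P$ and $|N_S(E)|\ge|N_S(P)|$ for all $P\in E^{\mathcal{F}}$, and $\mathrm{Out}_{\mathcal{F}}(E)$ has a strongly $p$-embedded subgroup. For $Q\le P$, $Q$ is $\mathcal{F}$-characteristic in $P$ if normalized by $\mathrm{Aut}_{\mathcal{F}}(P)$. For $\mathcal{F}$-essential $E_1,E_2$ with $N_S(E_1)=N_S(E_2)$, $\mathrm{core}_{\mathcal{F}}(E_1,E_2)$ is the largest subgroup of $E_1\cap E_2$ normalized by $\mathrm{Aut}_{\mathcal{F}}(E_1)$, $\mathrm{Aut}_{\mathcal{F}}(E_2)$ and $\mathrm{Aut}_{\mathcal{F}}(N_S(E_1))$. $O^{p'}(G)$ is the subgroup generated by the $p$-elements of $G$. A natural $\mathrm{SL}_2(p)$-module is the $2$-dimensional $\mathbb{F}_p$-module of $\mathrm{SL}_2(p)$ acting by matrix multiplication. *)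

theory Defs
  imports "HOL-Algebra.Algebra"
begin

definition conjmap :: "('a,'b) monoid_scheme \<Rightarrow> 'a \<Rightarrow> 'a set \<Rightarrow> 'a \<Rightarrow> 'a" where
  "conjmap S g P = (\<lambda>x\<in>P. inv\<^bsub>S\<^esub> g \<otimes>\<^bsub>S\<^esub> x \<otimes>\<^bsub>S\<^esub> g)"

definition inj_homs :: "('a,'b) monoid_scheme \<Rightarrow> 'a set \<Rightarrow> 'a set \<Rightarrow> ('a \<Rightarrow> 'a) set" where
  "inj_homs S P Q = {\<phi>. \<phi> \<in> extensional P \<and> \<phi> ` P \<subseteq> Q \<and> inj_on \<phi> P \<and>
      (\<forall>x\<in>P. \<forall>y\<in>P. \<phi> (x \<otimes>\<^bsub>S\<^esub> y) = \<phi> x \<otimes>\<^bsub>S\<^esub> \<phi> y)}"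

definition HomS :: "('a,'b) monoid_scheme \<Rightarrow> 'a set \<Rightarrow> 'a set \<Rightarrow> ('a \<Rightarrow> 'a) set" where
  "HomS S P Q = {conjmap S g P | g. g \<in> carrier S \<and> conjmap S g P ` P \<subseteq> Q}"

text \<open>A fusion system: F P Q = Hom_F(P,Q) for subgroups P, Q of S.\<close>
definition fusion_system ::
  "('a,'b) monoid_scheme \<Rightarrow> ('a set \<Rightarrow> 'a set \<Rightarrow> ('a \<Rightarrow> 'a) set) \<Rightarrow> bool" where
  "fusion_system S F \<longleftrightarrow>
     (\<forall>P Q. F P Q \<noteq> {} \<longrightarrow> subgroup P S \<and> subgroup Q S) \<and>
     (\<forall>P Q. subgroup P S \<and> subgroup Q S \<longrightarrow> HomS S P Q \<subseteq> F P Q \<and> F P Q \<subseteq> inj_homs S P Q) \<and>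
     (\<forall>P Q \<phi>. \<phi> \<in> F P Q \<longrightarrow> \<phi> \<in> F P (\<phi> ` P) \<and> restrict (inv_into P \<phi>) (\<phi> ` P) \<in> F (\<phi> ` P) P) \<and>
     (\<forall>P Q R \<phi> \<psi>. \<phi> \<in> F P Q \<and> \<psi> \<in> F Q R \<longrightarrow> restrict (\<psi> \<circ> \<phi>) P \<in> F P R)"

definition normalizerS :: "('a,'b) monoid_scheme \<Rightarrow> 'a set \<Rightarrow> 'a set" where
  "normalizerS S P = {g \<in> carrier S. (\<lambda>x. inv\<^bsub>S\<^esub> g \<otimes>\<^bsub>S\<^esub> x \<otimes>\<^bsub>S\<^esub> g) ` P = P}"

definition centralizerS :: "('a,'b) monoid_scheme \<Rightarrow> 'a set \<Rightarrow> 'a set \<Rightarrow> 'a set" where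
  "centralizerS S H P = {g \<in> H. \<forall>x\<in>P. g \<otimes>\<^bsub>S\<^esub> x = x \<otimes>\<^bsub>S\<^esub> g}"

definition Fconj :: "('a,'b) monoid_scheme \<Rightarrow> ('a set \<Rightarrow> 'a set \<Rightarrow> ('a \<Rightarrow> 'a) set) \<Rightarrow> 'a set \<Rightarrow> 'a set set" where
  "Fconj S F P = {\<alpha> ` P | \<alpha>. \<alpha> \<in> F P (carrier S)}"

definition fully_normalized where
  "fully_normalized S F P \<longleftrightarrow> (\<forall>Q\<in>Fconj S F P. card (normalizerS S Q) \<le> card (normalizerS S P))"

definition fully_centralized where
  "fully_centralized S F P \<longleftrightarrow>
     (\<forall>Q\<in>Fconj S F P. card (centralizerS S (carrier S) Q) \<le> card (centralizerS S (carrier S) P))"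

text \<open>Aut_S(P) is a Sylow p-subgroup of Aut_F(P): a p-subgroup of index prime to p.\<close>
definition fully_automized where
  "fully_automized (p::nat) S F P \<longleftrightarrow>
     (\<exists>n. card (HomS S P P) = p ^ n) \<and> \<not> p dvd (card (F P P) div card (HomS S P P))"

text \<open>N_\<phi> = {g \<in> N_S(Q) : \<phi> c_g \<phi>^-1 \<in> Aut_S(P)} for an F-isomorphism \<phi> : Q \<rightarrow> P.\<close>
definition N_phi where
  "N_phi S Q P \<phi> = {g \<in> normalizerS S Q.
      (\<lambda>x\<in>P. \<phi> (conjmap S g Q (inv_into Q \<phi> x))) \<in> HomS S P P}"

definition receptive where
  "receptive S F P \<longleftrightarrow>
     (\<forall>Q \<phi>. \<phi> \<in> F Q P \<and> \<phi> ` Q = P \<longrightarrow>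
        (\<exists>\<psi> \<in> F (N_phi S Q P \<phi>) (carrier S). \<forall>x\<in>Q. \<psi> x = \<phi> x))"

definition saturated_fusion_system where
  "saturated_fusion_system p S F \<longleftrightarrow> fusion_system S F \<and>
     (\<forall>P. subgroup P S \<longrightarrow>
        (fully_normalized S F P \<longrightarrow> fully_centralized S F P \<and> fully_automized p S F P) \<and>
        (fully_centralized S F P \<longrightarrow> receptive S F P))"

definition AutF :: "('a,'b) monoid_scheme \<Rightarrow> ('a set \<Rightarrow> 'a set \<Rightarrow> ('a \<Rightarrow> 'a) set) \<Rightarrow> 'a set \<Rightarrow> ('a \<Rightarrow> 'a) monoid" where
  "AutF S F P = \<lparr>carrier = F P P, monoid.mult = (\<lambda>\<alpha> \<beta>. restrict (\<alpha> \<circ> \<beta>) P), one = restrict id P\<rparr>"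

definition Inn :: "('a,'b) monoid_scheme \<Rightarrow> 'a set \<Rightarrow> ('a \<Rightarrow> 'a) set" where
  "Inn S P = {conjmap S g P | g. g \<in> P}"

definition OutF where
  "OutF S F P = AutF S F P Mod Inn S P"

definition strongly_p_embedded :: "nat \<Rightarrow> ('c,'d) monoid_scheme \<Rightarrow> 'c set \<Rightarrow> bool" where
  "strongly_p_embedded p G H \<longleftrightarrow> subgroup H G \<and> H \<noteq> carrier G \<and> p dvd card H \<and>
     (\<forall>x \<in> carrier G - H. \<not> p dvd card (H \<inter> (x <#\<^bsub>G\<^esub> H #>\<^bsub>G\<^esub> inv\<^bsub>G\<^esub> x)))"

definition essential where
  "essential p S F E \<longleftrightarrow> subgroup E S \<and>
     (\<forall>P\<in>Fconj S F E. centralizerS S (carrier S) P \<subseteq> P \<and>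
                       card (normalizerS S P) \<le> card (normalizerS S E)) \<and>
     (\<exists>H. strongly_p_embedded p (OutF S F E) H)"

definition F_characteristic where
  "F_characteristic F E Q \<longleftrightarrow> (\<forall>\<alpha> \<in> F E E. \<alpha> ` Q = Q)"

definition core_cond where
  "core_cond S F E1 E2 U \<longleftrightarrow> subgroup U S \<and> U \<subseteq> E1 \<inter> E2 \<and>
     F_characteristic F E1 U \<and> F_characteristic F E2 U \<and> F_characteristic F (normalizerS S E1) U"

definition is_core where
  "is_core S F E1 E2 T \<longleftrightarrow> core_cond S F E1 E2 T \<and> (\<forall>U. core_cond S F E1 E2 U \<longrightarrow> U \<subseteq> T)"

definition Opprime :: "nat \<Rightarrow> ('c,'d) monoid_scheme \<Rightarrow> 'c set" where
  "Opprime p G = generate G {x \<in> carrier G. \<exists>n. group.ord G x = p ^ n}"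

definition rank :: "('a,'b) monoid_scheme \<Rightarrow> 'a set \<Rightarrow> nat" where
  "rank S H = (LEAST n. \<exists>Y. Y \<subseteq> H \<and> finite Y \<and> card Y = n \<and> generate S Y = H)"

definition sectional_rank_le where
  "sectional_rank_le S V k \<longleftrightarrow> (\<forall>H. subgroup H S \<and> H \<subseteq> V \<longrightarrow> rank S H \<le> k)"

text \<open>SL_2(p) as 2x2 matrices over Z/p, entries in {0..p-1}, (a,b,c,d) = [[a,b],[c,d]].\<close>
definition SL2 :: "nat \<Rightarrow> (int \<times> int \<times> int \<times> int) monoid" where
  "SL2 p = \<lparr>carrier = {(a,b,c,d). a \<in> {0..<int p} \<and> b \<in> {0..<int p} \<and> c \<in> {0..<int p} \<and>
                         d \<in> {0..<int p} \<and> (a * d - b * c) mod int p = 1},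
            monoid.mult = (\<lambda>(a,b,c,d) (e,f,g,h).
               ((a*e + b*g) mod int p, (a*f + b*h) mod int p,
                (c*e + d*g) mod int p, (c*f + d*h) mod int p)),
            one = (1,0,0,1)\<rparr>"

definition matvec :: "nat \<Rightarrow> int \<times> int \<times> int \<times> int \<Rightarrow> int \<times> int \<Rightarrow> int \<times> int" where
  "matvec p M v = (case M of (a,b,c,d) \<Rightarrow> case v of (x,y) \<Rightarrow>
      ((a*x + b*y) mod int p, (c*x + d*y) mod int p))"

text \<open>V/T is a natural SL_2(p)-module for the subgroup K of Out_F(E) (a group G of cosets
  of Inn(E)): there are an isomorphism \<psi> : K \<cong> SL_2(p) and a surjective homomorphism
  \<theta> : V \<rightarrow> F_p^2 with kernel T (i.e. V/T \<cong> F_p^2) such that for X \<in> K, \<alpha> \<in> X, v \<in> V: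
  \<theta>(v\<alpha>) = \<psi>(X) \<theta>(v).\<close>
definition natural_SL2_module where
  "natural_SL2_module p S G K V T \<longleftrightarrow>
     (\<exists>\<psi> \<theta>. \<psi> \<in> iso (G\<lparr>carrier := K\<rparr>) (SL2 p) \<and>
        \<theta> ` V = {0..<int p} \<times> {0..<int p} \<and>
        (\<forall>v\<in>V. \<forall>w\<in>V. \<theta> (v \<otimes>\<^bsub>S\<^esub> w) = ((fst (\<theta> v) + fst (\<theta> w)) mod int p,
                                         (snd (\<theta> v) + snd (\<theta> w)) mod int p)) \<and>
        (\<forall>v\<in>V. \<theta> v = (0,0) \<longleftrightarrow> v \<in> T) \<and>
        (\<forall>C\<in>K. \<forall>\<alpha>\<in>C. \<forall>v\<in>V. \<theta> (\<alpha> v) = matvec p (\<psi> C) (\<theta> v)))"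

text \<open>A subgroup K of Out_F(E) centralizes T: every coset in K has a representative
  acting trivially on T.\<close>
definition Out_centralizes where
  "Out_centralizes K T \<longleftrightarrow> (\<forall>C\<in>K. \<exists>\<alpha>\<in>C. \<forall>t\<in>T. \<alpha> t = t)"

end

theory Submission
  imports Defs
begin

(*
  Write \<theta> = (\<theta>1, \<theta>2) : V \<rightarrow> \<int>/p \<times> \<int>/p for the module map of the natural module V/T, and
  \<alpha> \<in> Aut_F(E1) for a representative of -I \<in> SL_2(p) that fixes T pointwise.  Everything
  follows from rank V \<le> 3: since \<theta>1 and \<theta>2 vanish on T, no two homomorphisms V \<rightarrow> \<int>/p can be
  independent on T, so any quotient of T through which such homomorphisms factor is cyclic.

  If T were nonabelian, T/Z(T) would not be cyclic; since V = C_V(T)T, homomorphisms of T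
  killing Z(T) lift to V through v = ct \<mapsto> t.  So T is abelian, hence central in V, and then
  [V,V] \<le> T, commutation is bilinear on V, and [V,V] is generated by [v1,v2] for a basis
  v1, v2 of V/T, whose p-th power is [v1^p,v2] = 1.  Finally homomorphisms of T killing [V,V]
  lift to V through v \<mapsto> v(v\<alpha>), which lies in T because \<alpha> inverts V/T; evaluated at
  t^((p+1)/2) the lift gives back the value at t, so T/[V,V] is cyclic.
*)

section \<open>Homomorphisms into \<open>\<int>/p\<close>\<close>

abbreviation Zp_hom :: "nat \<Rightarrow> ('a, 'b) monoid_scheme \<Rightarrow> 'a set \<Rightarrow> ('a \<Rightarrow> int) set" where
  "Zp_hom p G H \<equiv> hom (G\<lparr>carrier := H\<rparr>) (integer_mod_group p)"

lemma Zp_hom_range: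
  assumes "l \<in> Zp_hom p G H" "0 < p" "x \<in> H"
  shows "0 \<le> l x" "l x < int p"
  using hom_in_carrier[OF assms(1)] assms(2,3) by (auto simp: carrier_integer_mod_group)

lemma Zp_hom_mod [simp]:
  assumes "l \<in> Zp_hom p G H" "0 < p" "x \<in> H"
  shows "l x mod int p = l x"
  using Zp_hom_range[OF assms] by simp

lemma Zp_hom_mult:
  "l \<in> Zp_hom p G H \<Longrightarrow> x \<in> H \<Longrightarrow> y \<in> H \<Longrightarrow> l (x \<otimes>\<^bsub>G\<^esub> y) = (l x + l y) mod int p"
  using hom_mult[of l "G\<lparr>carrier := H\<rparr>" "integer_mod_group p"] by simp

lemma Zp_homI:
  assumes "\<And>x. x \<in> H \<Longrightarrow> l x \<in> {0..<int p}"
    and "\<And>x y. x \<in> H \<Longrightarrow> y \<in> H \<Longrightarrow> l (x \<otimes>\<^bsub>G\<^esub> y) = (l x + l y) mod int p"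
    and "0 < p"
  shows "l \<in> Zp_hom p G H"
  using assms by (intro homI) (auto simp: carrier_integer_mod_group)

context group
begin

lemma inv_mult_cancel [simp]: "x \<in> carrier G \<Longrightarrow> y \<in> carrier G \<Longrightarrow> inv x \<otimes> (x \<otimes> y) = y"
  by (simp add: m_assoc[symmetric])

lemma mult_inv_cancel [simp]: "x \<in> carrier G \<Longrightarrow> y \<in> carrier G \<Longrightarrow> x \<otimes> (inv x \<otimes> y) = y"
  by (simp add: m_assoc[symmetric])

lemma subgroup_nat_pow_closed: "subgroup H G \<Longrightarrow> h \<in> H \<Longrightarrow> h [^] (n::nat) \<in> H"
  using subgroup_int_pow_closed[of H h "int n"] by (simp add: int_pow_int)

lemma Zp_hom_group_hom: "l \<in> Zp_hom p G H \<Longrightarrow> subgroup H G \<Longrightarrow> group_hom (G\<lparr>carrier := H\<rparr>) (integer_mod_group p) l"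
  by (simp add: group_hom_def group_hom_axioms_def subgroup_imp_group)

lemma Zp_hom_one: "l \<in> Zp_hom p G H \<Longrightarrow> subgroup H G \<Longrightarrow> l \<one> = 0"
  using group_hom.hom_one[OF Zp_hom_group_hom] by simp

lemma Zp_hom_inv:
  assumes "l \<in> Zp_hom p G H" "subgroup H G" "x \<in> H"
  shows "l (inv x) = (- l x) mod int p"
  using group_hom.hom_inv[OF Zp_hom_group_hom[OF assms(1,2)], of x] hom_in_carrier[OF assms(1), of x] assms
  by simp

lemma Zp_hom_pow:
  assumes "l \<in> Zp_hom p G H" "subgroup H G" "x \<in> H"
  shows "l (x [^] (n::nat)) = (int n * l x) mod int p"
  using group_hom.hom_nat_pow[OF Zp_hom_group_hom[OF assms(1,2)], of x n] assms(3)
  by (simp add: nat_pow_consistent[of x n H, symmetric])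

lemma Zp_hom_generate_lincomb:
  assumes H: "subgroup H G" and Y: "Y \<subseteq> H" "finite Y" and x: "x \<in> generate G Y"
  shows "\<exists>c. \<forall>l \<in> Zp_hom p G H. l x = (\<Sum>y\<in>Y. c y * l y) mod int p"
  using x
proof (induction rule: generate.induct)
  case one
  show ?case by (rule exI[of _ "\<lambda>_. 0"]) (simp add: Zp_hom_one[OF _ H])
next
  case (incl h)
  show ?case
  proof (rule exI[of _ "\<lambda>y. of_bool (y = h)"], intro ballI)
    fix l assume l: "l \<in> Zp_hom p G H"
    have "(\<Sum>y\<in>Y. of_bool (y = h) * l y) = l h"
      using incl Y(2) by simp
    with l incl Y(1) show "l h = (\<Sum>y\<in>Y. of_bool (y = h) * l y) mod int p"
      by (cases "p = 0") (auto simp: Zp_hom_mod)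
  qed
next
  case (inv h)
  show ?case
  proof (rule exI[of _ "\<lambda>y. - of_bool (y = h)"], intro ballI)
    fix l assume l: "l \<in> Zp_hom p G H"
    have "(\<Sum>y\<in>Y. - of_bool (y = h) * l y) = - l h"
      using inv Y(2) by (simp add: sum_negf)
    with Zp_hom_inv[OF l H] inv Y(1)
    show "l (inv h) = (\<Sum>y\<in>Y. - of_bool (y = h) * l y) mod int p" by auto
  qed
next
  case (eng h1 h2)
  then obtain c1 c2 where c1: "\<forall>l \<in> Zp_hom p G H. l h1 = (\<Sum>y\<in>Y. c1 y * l y) mod int p"
    and c2: "\<forall>l \<in> Zp_hom p G H. l h2 = (\<Sum>y\<in>Y. c2 y * l y) mod int p" by blast
  have h12: "h1 \<in> H" "h2 \<in> H"
    using eng generate_subgroup_incl[OF Y(1) H] by auto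
  show ?case
  proof (rule exI[of _ "\<lambda>y. c1 y + c2 y"], intro ballI)
    fix l assume l: "l \<in> Zp_hom p G H"
    have "l (h1 \<otimes> h2) = (l h1 + l h2) mod int p"
      using Zp_hom_mult[OF l \<open>h1 \<in> H\<close> \<open>h2 \<in> H\<close>] .
    also have "\<dots> = ((\<Sum>y\<in>Y. c1 y * l y) + (\<Sum>y\<in>Y. c2 y * l y)) mod int p"
      using c1[rule_format, OF l] c2[rule_format, OF l] by (simp add: mod_add_eq)
    finally show "l (h1 \<otimes> h2) = (\<Sum>y\<in>Y. (c1 y + c2 y) * l y) mod int p"
      by (simp add: sum.distrib distrib_right)
  qed
qed

lemma four_le_rank:
  assumes V: "subgroup V G" "finite V" and p: "1 < p"
    and l: "l1 \<in> Zp_hom p G V" "l2 \<in> Zp_hom p G V" "l3 \<in> Zp_hom p G V" "l4 \<in> Zp_hom p G V"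
    and onto: "{0..<int p} \<times> {0..<int p} \<times> {0..<int p} \<times> {0..<int p}
               \<subseteq> (\<lambda>v. (l1 v, l2 v, l3 v, l4 v)) ` V"
  shows "4 \<le> rank G V"
proof -
  have "generate G V = V"
    using generate_subgroup_incl[OF subset_refl V(1)] generate.incl[of _ V G] by blast
  then have "\<exists>n Y. Y \<subseteq> V \<and> finite Y \<and> card Y = n \<and> generate G Y = V"
    using V(2) by blast
  from LeastI_ex[OF this]
  obtain Y where Y: "Y \<subseteq> V" "finite Y" "card Y = rank G V" "generate G Y = V"
    unfolding rank_def by blast
  define lin where "lin l c = (\<Sum>y\<in>Y. c y * l y) mod int p" for l and c :: "'a \<Rightarrow> int"
  define g where "g c = (lin l1 c, lin l2 c, lin l3 c, lin l4 c)" for c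
  have "(\<lambda>v. (l1 v, l2 v, l3 v, l4 v)) ` V \<subseteq> g ` (Y \<rightarrow>\<^sub>E {0..<int p})"
  proof clarify
    fix v assume "v \<in> V"
    then obtain c where c: "\<forall>l \<in> Zp_hom p G V. l v = lin l c"
      using Zp_hom_generate_lincomb[OF V(1) Y(1,2)] Y(4) unfolding lin_def by blast
    define c' where "c' = restrict (\<lambda>y. c y mod int p) Y"
    have "lin l c' = lin l c" for l
    proof -
      have "lin l c' = (\<Sum>y\<in>Y. (c y mod int p) * l y) mod int p"
        unfolding lin_def c'_def by simp
      also have "\<dots> = (\<Sum>y\<in>Y. (c y mod int p) * l y mod int p) mod int p"
        by (rule mod_sum_eq[symmetric])
      also have "\<dots> = (\<Sum>y\<in>Y. c y * l y mod int p) mod int p"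
        by (simp only: mod_mult_left_eq)
      also have "\<dots> = lin l c"
        unfolding lin_def by (rule mod_sum_eq)
      finally show ?thesis .
    qed
    with c l have "g c' = (l1 v, l2 v, l3 v, l4 v)"
      unfolding g_def by simp
    moreover have "c' \<in> Y \<rightarrow>\<^sub>E {0..<int p}"
      using p unfolding c'_def by auto
    ultimately show "(l1 v, l2 v, l3 v, l4 v) \<in> g ` (Y \<rightarrow>\<^sub>E {0..<int p})"
      by (rule image_eqI[OF sym])
  qed
  then have "{0..<int p} \<times> {0..<int p} \<times> {0..<int p} \<times> {0..<int p} \<subseteq> g ` (Y \<rightarrow>\<^sub>E {0..<int p})"
    using onto by (rule order_trans[rotated])
  then have "card ({0..<int p} \<times> {0..<int p} \<times> {0..<int p} \<times> {0..<int p})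
             \<le> card (g ` (Y \<rightarrow>\<^sub>E {0..<int p}))"
    by (rule card_mono[rotated]) (simp add: finite_PiE Y(2))
  then have "p ^ 4 \<le> card (g ` (Y \<rightarrow>\<^sub>E {0..<int p}))"
    by (simp add: card_cartesian_product power4_eq_xxxx)
  also have "\<dots> \<le> card (Y \<rightarrow>\<^sub>E {0..<int p})"
    by (rule card_image_le) (simp add: finite_PiE Y(2))
  also have "\<dots> = p ^ rank G V"
    using Y(2,3) by (simp add: card_PiE)
  finally show ?thesis
    by (rule power_le_imp_le_exp[OF p])
qed

lemma Zp_hom_mult_pow:
  assumes l: "l \<in> Zp_hom p G H" and H: "subgroup H G" and wu: "w \<in> H" "u \<in> H"
  shows "l (w \<otimes> u [^] (n::nat)) = (l w + int n * l u) mod int p"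
proof -
  have "u [^] n \<in> H"
    using subgroup_nat_pow_closed[OF H wu(2)] .
  then show ?thesis
    using Zp_hom_mult[OF l wu(1)] Zp_hom_pow[OF l H wu(2)] by (simp add: mod_add_right_eq)
qed

lemma four_le_rank_if_triangular:
  assumes V: "subgroup V G" "finite V" and p: "1 < p"
    and l: "l1 \<in> Zp_hom p G V" "l2 \<in> Zp_hom p G V" "l3 \<in> Zp_hom p G V" "l4 \<in> Zp_hom p G V"
    and u: "u1 \<in> V" "u2 \<in> V" "u3 \<in> V" "u4 \<in> V"
    and u1: "l1 u1 = 1"
    and u2: "l1 u2 = 0" "l2 u2 = 1"
    and u3: "l1 u3 = 0" "l2 u3 = 0" "l3 u3 = 1" "l4 u3 = 0"
    and u4: "l1 u4 = 0" "l2 u4 = 0" "l4 u4 = 1"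
  shows "4 \<le> rank G V"
proof (rule four_le_rank[OF V p l])
  define adjust where "adjust l w u c = w \<otimes> u [^] nat ((c - l w) mod int p)" for l w u c
  have adjust_closed: "adjust l w u c \<in> V" if "w \<in> V" "u \<in> V" for l w u c
    using subgroup_nat_pow_closed[OF V(1) that(2)] subgroup.m_closed[OF V(1) that(1)]
    unfolding adjust_def by blast
  have adjust_hits: "l (adjust l w u c) = c"
    if "l \<in> Zp_hom p G V" "w \<in> V" "u \<in> V" "l u = 1" "c \<in> {0..<int p}" for l w u c
  proof -
    have "int (nat ((c - l w) mod int p)) = (c - l w) mod int p"
      using p by simp
    then show ?thesis
      using Zp_hom_mult_pow[OF that(1) V(1) that(2,3), of "nat ((c - l w) mod int p)"] that(4,5)
      unfolding adjust_def by (simp add: mod_add_right_eq)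
  qed
  have adjust_keeps: "l' (adjust l w u c) = l' w"
    if "l' \<in> Zp_hom p G V" "w \<in> V" "u \<in> V" "l' u = 0" for l l' w u c
    using Zp_hom_mult_pow[OF that(1) V(1) that(2,3), of "nat ((c - l w) mod int p)"] that(4)
      Zp_hom_mod[OF that(1) _ that(2)] p
    unfolding adjust_def by simp
  show "{0..<int p} \<times> {0..<int p} \<times> {0..<int p} \<times> {0..<int p}
        \<subseteq> (\<lambda>v. (l1 v, l2 v, l3 v, l4 v)) ` V"
  proof clarify
    fix a b c d assume abcd: "a \<in> {0..<int p}" "b \<in> {0..<int p}" "c \<in> {0..<int p}" "d \<in> {0..<int p}"
    define w1 where "w1 = adjust l1 \<one> u1 a"
    define w2 where "w2 = adjust l2 w1 u2 b"
    define w4 where "w4 = adjust l4 w2 u4 d"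
    define v where "v = adjust l3 w4 u3 c"
    have one: "\<one> \<in> V"
      using subgroup.one_closed[OF V(1)] .
    have w1: "w1 \<in> V" "l1 w1 = a"
      unfolding w1_def using adjust_closed[OF one u(1)] adjust_hits[OF l(1) one u(1) u1 abcd(1)]
      by simp_all
    have w2: "w2 \<in> V" "l1 w2 = a" "l2 w2 = b"
      unfolding w2_def using adjust_closed[OF w1(1) u(2)] adjust_hits[OF l(2) w1(1) u(2) u2(2) abcd(2)]
        adjust_keeps[OF l(1) w1(1) u(2) u2(1)] w1(2)
      by simp_all
    have w4: "w4 \<in> V" "l1 w4 = a" "l2 w4 = b" "l4 w4 = d"
      unfolding w4_def using adjust_closed[OF w2(1) u(4)] adjust_hits[OF l(4) w2(1) u(4) u4(3) abcd(4)]
        adjust_keeps[OF l(1) w2(1) u(4) u4(1)] adjust_keeps[OF l(2) w2(1) u(4) u4(2)] w2(2,3)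
      by simp_all
    have "v \<in> V" "(l1 v, l2 v, l3 v, l4 v) = (a, b, c, d)"
      unfolding v_def using adjust_closed[OF w4(1) u(3)] adjust_hits[OF l(3) w4(1) u(3) u3(3) abcd(3)]
        adjust_keeps[OF l(1) w4(1) u(3) u3(1)] adjust_keeps[OF l(2) w4(1) u(3) u3(2)]
        adjust_keeps[OF l(4) w4(1) u(3) u3(4)] w4(2-4)
      by simp_all
    then show "(a, b, c, d) \<in> (\<lambda>v. (l1 v, l2 v, l3 v, l4 v)) ` V"
      by (rule rev_image_eqI[OF _ sym])
  qed
qed

end

section \<open>Finite \<open>p\<close>-groups\<close>

lemma (in group_action) card_mod_eq_card_fixed_points:
  assumes E: "finite E" and G: "finite (carrier G)" and ord: "order G = p ^ a" and p: "Factorial_Ring.prime p"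
  shows "card E mod p = card {x \<in> E. \<forall>g \<in> carrier G. \<phi> g x = x} mod p"
proof -
  define Fix where "Fix = {x \<in> E. \<forall>g \<in> carrier G. \<phi> g x = x}"
  have orbit_sub: "orbit G \<phi> x \<subseteq> E" if "x \<in> E" for x
    using element_image that unfolding orbit_def by blast
  have orbit_eq: "orbit G \<phi> y = orbit G \<phi> x" if "x \<in> E" "y \<in> orbit G \<phi> x" for x y
    using that orbit_sub[OF that(1)] orbit_sub orbit_sym orbit_trans by blast
  have fixed_iff: "y \<in> Fix \<longleftrightarrow> card (orbit G \<phi> y) = 1" if y: "y \<in> E" for y
  proof
    assume "y \<in> Fix"
    then have "orbit G \<phi> y = {y}"
      using orbit_refl[OF y] unfolding Fix_def orbit_def by auto
    then show "card (orbit G \<phi> y) = 1" by simp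
  next
    assume "card (orbit G \<phi> y) = 1"
    then have "orbit G \<phi> y = {y}"
      using orbit_refl[OF y] by (metis card_1_singletonE singletonD)
    then show "y \<in> Fix"
      using y unfolding Fix_def orbit_def by blast
  qed
  have orbit_card: "card (orbit G \<phi> x) = 1 \<or> p dvd card (orbit G \<phi> x)" if x: "x \<in> E" for x
  proof -
    have "card (orbit G \<phi> x) dvd p ^ a"
      using orbit_stabilizer_theorem[OF x] ord by (metis dvd_triv_left)
    then obtain b where "card (orbit G \<phi> x) = p ^ b"
      using divides_primepow_nat[OF p] by blast
    then show ?thesis by (cases b) auto
  qed
  have "p dvd (\<Sum>y \<in> Orb. of_bool (y \<notin> Fix))" if Orb: "Orb \<in> orbits G E \<phi>" for Orb
  proof -
    obtain x where x: "x \<in> E" "Orb = orbit G \<phi> x" using Orb unfolding orbits_def by blast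
    have "y \<in> Fix \<longleftrightarrow> card Orb = 1" if "y \<in> Orb" for y
      using fixed_iff orbit_eq[OF x(1)] orbit_sub[OF x(1)] that x(2) by auto
    then have "(\<Sum>y \<in> Orb. of_bool (y \<notin> Fix)) = (if card Orb = 1 then 0 else card Orb)"
      by simp
    then show ?thesis
      using orbit_card[OF x(1)] x(2) by auto
  qed
  then have "p dvd (\<Sum>Orb \<in> orbits G E \<phi>. \<Sum>y \<in> Orb. of_bool (y \<notin> Fix))"
    by (rule dvd_sum)
  also have "(\<Sum>Orb \<in> orbits G E \<phi>. \<Sum>y \<in> Orb. of_bool (y \<notin> Fix)) = (\<Sum>y \<in> E. of_bool (y \<notin> Fix))"
    by (rule disjoint_sum[OF E])
  also have "\<dots> = card (E - Fix)"
    using E by (simp add: Diff_eq Int_def)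
  finally have "card (E - Fix) mod p = 0" by simp
  have "card E = card Fix + card (E - Fix)"
    using E card_Diff_subset[of Fix E] card_mono[of E Fix] unfolding Fix_def by fastforce
  then have "card E mod p = (card Fix + card (E - Fix) mod p) mod p"
    by (simp add: mod_add_right_eq)
  also have "\<dots> = card Fix mod p"
    using \<open>card (E - Fix) mod p = 0\<close> by simp
  finally show ?thesis
    unfolding Fix_def .
qed

context group
begin

lemma rcosets_right_action:
  assumes M: "subgroup M G"
  shows "group_action G (rcosets M) (\<lambda>g. \<lambda>C \<in> rcosets M. C #> inv g)"
proof -
  define \<phi> where "\<phi> g = (\<lambda>C \<in> rcosets M. C #> inv g)" for g
  have Msub: "M \<subseteq> carrier G" using subgroup.subset[OF M] .
  have closed: "C #> g \<in> rcosets M" if C: "C \<in> rcosets M" and g: "g \<in> carrier G" for C g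
  proof -
    obtain a where a: "a \<in> carrier G" "C = M #> a"
      using C unfolding RCOSETS_def by blast
    then show ?thesis
      using coset_mult_assoc[OF Msub a(1) g] rcosetsI[OF Msub m_closed[OF a(1) g]] by simp
  qed
  have Csub: "C \<subseteq> carrier G" if "C \<in> rcosets M" for C
    using subgroup.rcosets_carrier[OF M is_group that] .
  have assoc: "C #> g #> h = C #> (g \<otimes> h)" if "C \<in> rcosets M" "g \<in> carrier G" "h \<in> carrier G" for C g h
    using coset_mult_assoc[OF Csub[OF that(1)] that(2,3)] .
  have bij: "\<phi> g \<in> Bij (rcosets M)" if g: "g \<in> carrier G" for g
  proof -
    have "bij_betw (\<lambda>C. C #> inv g) (rcosets M) (rcosets M)"
    proof (rule bij_betwI[where g = "\<lambda>C. C #> g"])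
      show "(\<lambda>C. C #> inv g) \<in> rcosets M \<rightarrow> rcosets M" "(\<lambda>C. C #> g) \<in> rcosets M \<rightarrow> rcosets M"
        using closed g by auto
      show "C #> inv g #> g = C" "C #> g #> inv g = C" if "C \<in> rcosets M" for C
        using assoc[OF that] g Csub[OF that] by simp_all
    qed
    then show ?thesis
      unfolding Bij_def \<phi>_def by simp
  qed
  have "\<phi> \<in> hom G (BijGroup (rcosets M))"
  proof (rule homI)
    show "\<phi> g \<in> carrier (BijGroup (rcosets M))" if "g \<in> carrier G" for g
      using bij[OF that] unfolding BijGroup_def by simp
    show "\<phi> (g \<otimes> h) = \<phi> g \<otimes>\<^bsub>BijGroup (rcosets M)\<^esub> \<phi> h" if gh: "g \<in> carrier G" "h \<in> carrier G" for g h
    proof -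
      have "compose (rcosets M) (\<phi> g) (\<phi> h) = \<phi> (g \<otimes> h)"
      proof
        fix C show "compose (rcosets M) (\<phi> g) (\<phi> h) C = \<phi> (g \<otimes> h) C"
          using closed[OF _ inv_closed[OF gh(2)]] assoc[OF _ inv_closed[OF gh(2)] inv_closed[OF gh(1)]] gh
          by (simp add: \<phi>_def compose_def inv_mult_group)
      qed
      then show ?thesis
        using bij gh unfolding BijGroup_def by simp
    qed
  qed
  then show ?thesis
    unfolding group_action_def group_hom_def group_hom_axioms_def \<phi>_def
    by (simp add: group_BijGroup is_group)
qed

lemma card_subgroup_prime_power:
  assumes "order G = p ^ n" and p: "Factorial_Ring.prime p" and M: "subgroup M G"
  shows "\<exists>a \<le> n. card M = p ^ a"
proof -
  have "card M dvd p ^ n"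
    using lagrange[OF M] assms(1) by (metis dvd_triv_right)
  then show ?thesis
    using divides_primepow_nat[OF p] by blast
qed

lemma normalizer_conj_mem:
  assumes x: "x \<in> normalizer G M" and M: "M \<subseteq> carrier G" and m: "m \<in> M"
  shows "x \<otimes> m \<otimes> inv x \<in> M"
proof -
  have "x <# M #> inv x = M"
    using x M unfolding normalizer_def stabilizer_def by simp
  moreover have "x \<otimes> m \<otimes> inv x \<in> x <# M #> inv x"
    using m unfolding l_coset_def r_coset_def by blast
  ultimately show ?thesis by simp
qed

lemma normalizerI:
  assumes x: "x \<in> carrier G" and M: "subgroup M G" "finite M"
    and conj: "\<And>m. m \<in> M \<Longrightarrow> x \<otimes> m \<otimes> inv x \<in> M"
  shows "x \<in> normalizer G M"
proof -
  have Msub: "M \<subseteq> carrier G" using subgroup.subset[OF M(1)] .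
  have "inj_on (\<lambda>m. x \<otimes> m \<otimes> inv x) M"
  proof (rule inj_onI)
    fix a b assume ab: "a \<in> M" "b \<in> M" "x \<otimes> a \<otimes> inv x = x \<otimes> b \<otimes> inv x"
    have "a \<in> carrier G" "b \<in> carrier G" using ab Msub by auto
    with ab(3) show "a = b"
      using x by (simp add: m_assoc)
  qed
  then have "(\<lambda>m. x \<otimes> m \<otimes> inv x) ` M = M"
    using conj by (intro endo_inj_surj[OF M(2)]) auto
  moreover have "x <# M #> inv x = (\<lambda>m. x \<otimes> m \<otimes> inv x) ` M"
    unfolding l_coset_def r_coset_def by blast
  ultimately show ?thesis
    using x Msub unfolding normalizer_def stabilizer_def by simp
qed

lemma pgroup_normalizer_grows:
  assumes G: "finite (carrier G)" "order G = p ^ n" and p: "Factorial_Ring.prime p"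
    and M: "subgroup M G" "M \<noteq> carrier G"
  shows "\<exists>x \<in> normalizer G M. x \<notin> M"
proof -
  have Msub: "M \<subseteq> carrier G" using subgroup.subset[OF M(1)] .
  define \<phi> where "\<phi> g = (\<lambda>C \<in> rcosets M. C #> inv g)" for g
  interpret A: group_action "G\<lparr>carrier := M\<rparr>" "rcosets M" \<phi>
    unfolding \<phi>_def using group_action.induced_action[OF rcosets_right_action[OF M(1)] M(1)] .
  define Fix where "Fix = {C \<in> rcosets M. \<forall>m \<in> M. \<phi> m C = C}"
  obtain a where a: "a \<le> n" "card M = p ^ a"
    using card_subgroup_prime_power[OF G(2) p M(1)] by blast
  have "a \<noteq> n"
    using a G M card_subset_eq[OF G(1) Msub] unfolding order_def by auto
  have "card (rcosets M) * p ^ a = p ^ (n - a) * p ^ a"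
    using lagrange[OF M(1)] a G(2) by (simp add: power_add[symmetric])
  then have "card (rcosets M) = p ^ (n - a)"
    using p prime_gt_0_nat by simp
  then have "card (rcosets M) mod p = 0"
    using \<open>a \<le> n\<close> \<open>a \<noteq> n\<close> by simp
  moreover have "card (rcosets M) mod p = card Fix mod p"
    unfolding Fix_def using A.card_mod_eq_card_fixed_points[of p a] G(1) a(2) p
    by (simp add: order_def finite_subset[OF Msub] RCOSETS_def)
  ultimately have "p dvd card Fix" by (simp add: dvd_eq_mod_eq_0)
  have MFix: "M \<in> Fix"
    unfolding Fix_def \<phi>_def using rcosetsI[OF Msub one_closed] Msub
      subgroup.rcos_const[OF M(1) is_group subgroup.m_inv_closed[OF M(1)]] by simp
  have "finite Fix"
    unfolding Fix_def RCOSETS_def using G(1) by simp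
  then have "Fix \<noteq> {M}"
    using \<open>p dvd card Fix\<close> p by auto
  then obtain C where C: "C \<in> Fix" "C \<noteq> M"
    using MFix by blast
  then obtain x where x: "x \<in> carrier G" "C = M #> x"
    unfolding Fix_def RCOSETS_def by blast
  have "x \<notin> M"
    using x C(2) subgroup.rcos_const[OF M(1) is_group] by blast
  moreover have "x \<in> normalizer G M"
  proof (rule normalizerI[OF x(1) M(1) finite_subset[OF Msub G(1)]])
    fix m assume m: "m \<in> M"
    have "\<phi> (inv m) C = C"
      using C(1) subgroup.m_inv_closed[OF M(1) m] unfolding Fix_def by blast
    then have "M #> x #> m = M #> x"
      using C(1) x(2) m Msub unfolding Fix_def \<phi>_def by (auto simp: subsetD)
    then have "M #> (x \<otimes> m) = M #> x"
      using coset_mult_assoc[OF Msub x(1)] m Msub by auto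
    then have "x \<otimes> m \<in> M #> x"
      using repr_independenceD[OF M(1)] x(1) m Msub by blast
    then show "x \<otimes> m \<otimes> inv x \<in> M"
      using subgroup.rcos_module_imp[OF M(1) is_group x(1)] by blast
  qed
  ultimately show ?thesis by blast
qed

lemma pgroup_mem_if_pow_mem:
  assumes G: "finite (carrier G)" "order G = p ^ n" and p: "Factorial_Ring.prime p"
    and M: "subgroup M G" and x: "x \<in> carrier G" and xd: "x [^] (d::int) \<in> M" and d: "\<not> int p dvd d"
  shows "x \<in> M"
proof -
  have "coprime (int p) d"
    using d p prime_imp_coprime_int prime_nat_int_transfer by blast
  then have "coprime d (int (p ^ n))"
    by (simp add: coprime_commute)
  then obtain u v where uv: "u * d + v * int (p ^ n) = 1"
    by (metis bezout_int coprime_iff_gcd_eq_1)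
  have one: "x [^] int (p ^ n) = \<one>"
    unfolding int_pow_int G(2)[symmetric] by (rule pow_order_eq_1[OF x])
  have "x = x [^] (u * d + v * int (p ^ n))"
    using uv x by simp
  also have "\<dots> = (x [^] d) [^] u \<otimes> (x [^] int (p ^ n)) [^] v"
    using x by (simp add: int_pow_mult int_pow_pow mult.commute)
  also have "\<dots> = (x [^] d) [^] u"
    using one x by simp
  finally show ?thesis
    using subgroup_int_pow_closed[OF M xd, of u] by simp
qed

lemma normalizer_pow_conj_mem:
  assumes M: "subgroup M G" and y: "y \<in> normalizer G M" and m: "m \<in> M"
  shows "y [^] (j::int) \<otimes> m \<otimes> inv (y [^] j) \<in> M"
proof -
  have "M \<subseteq> carrier G" using subgroup.subset[OF M] .
  then show ?thesis
    using normalizer_conj_mem[OF _ _ m] y normalizer_imp_subgroup by (simp add: subgroup_int_pow_closed)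
qed

lemma powers_mult_closed:
  assumes M: "subgroup M G" and y: "y \<in> normalizer G M" and m: "m \<in> M" "m' \<in> M"
  shows "\<exists>m'' \<in> M. (y [^] (i::int) \<otimes> m) \<otimes> (y [^] (j::int) \<otimes> m') = y [^] (i + j) \<otimes> m''"
proof
  have yc: "y \<in> carrier G" using y unfolding normalizer_def stabilizer_def by simp
  have mc: "m \<in> carrier G" "m' \<in> carrier G" using m subgroup.subset[OF M] by auto
  show "(y [^] (- j) \<otimes> m \<otimes> inv (y [^] (- j))) \<otimes> m' \<in> M"
    using normalizer_pow_conj_mem[OF M y m(1)] subgroup.m_closed[OF M _ m(2)] by blast
  show "(y [^] i \<otimes> m) \<otimes> (y [^] j \<otimes> m') = y [^] (i + j) \<otimes> ((y [^] (- j) \<otimes> m \<otimes> inv (y [^] (- j))) \<otimes> m')"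
    using mc yc by (simp add: int_pow_mult int_pow_neg m_assoc)
qed

lemma powers_mult_subgroup:
  assumes M: "subgroup M G" and y: "y \<in> normalizer G M"
  shows "subgroup {y [^] (i::int) \<otimes> m | i m. m \<in> M} G"
proof (rule subgroupI)
  have Msub: "M \<subseteq> carrier G" using subgroup.subset[OF M] .
  have yc: "y \<in> carrier G" using y unfolding normalizer_def stabilizer_def by simp
  show "{y [^] (i::int) \<otimes> m | i m. m \<in> M} \<subseteq> carrier G"
    using yc Msub by auto
  show "{y [^] (i::int) \<otimes> m | i m. m \<in> M} \<noteq> {}"
    using subgroup.one_closed[OF M] by blast
  fix a assume "a \<in> {y [^] (i::int) \<otimes> m | i m. m \<in> M}"
  then obtain i m where im: "m \<in> M" "a = y [^] (i::int) \<otimes> m" by blast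
  have mc: "m \<in> carrier G" using im(1) Msub by auto
  have "inv a = y [^] (- i) \<otimes> (y [^] i \<otimes> inv m \<otimes> inv (y [^] i))"
    using im(2) mc yc by (simp add: inv_mult_group int_pow_neg m_assoc)
  moreover have "y [^] i \<otimes> inv m \<otimes> inv (y [^] i) \<in> M"
    using normalizer_pow_conj_mem[OF M y subgroup.m_inv_closed[OF M im(1)]] .
  ultimately show "inv a \<in> {y [^] (i::int) \<otimes> m | i m. m \<in> M}" by blast
next
  fix a b assume "a \<in> {y [^] (i::int) \<otimes> m | i m. m \<in> M}" "b \<in> {y [^] (i::int) \<otimes> m | i m. m \<in> M}"
  then obtain i m j m' where "m \<in> M" "m' \<in> M" "a = y [^] (i::int) \<otimes> m" "b = y [^] (j::int) \<otimes> m'"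
    by blast
  moreover obtain m'' where "m'' \<in> M" "(y [^] i \<otimes> m) \<otimes> (y [^] j \<otimes> m') = y [^] (i + j) \<otimes> m''"
    using powers_mult_closed[OF M y \<open>m \<in> M\<close> \<open>m' \<in> M\<close>] by blast
  ultimately show "a \<otimes> b \<in> {y [^] (i::int) \<otimes> m | i m. m \<in> M}"
    by blast
qed

lemma maximal_proper_subgroup:
  assumes G: "finite (carrier G)" and H: "subgroup H G" "H \<noteq> carrier G"
  obtains M where "subgroup M G" "H \<subseteq> M" "M \<noteq> carrier G"
    "\<And>M'. subgroup M' G \<Longrightarrow> M \<subseteq> M' \<Longrightarrow> M' \<noteq> carrier G \<Longrightarrow> M' = M"
proof -
  define A where "A = {M. subgroup M G \<and> H \<subseteq> M \<and> M \<noteq> carrier G}"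
  have "A \<subseteq> Pow (carrier G)"
    unfolding A_def by (auto dest: subgroup.subset)
  then have "finite A"
    using G by (simp add: finite_subset)
  moreover have "H \<in> A"
    unfolding A_def using H by blast
  ultimately obtain M where M: "M \<in> A" "H \<subseteq> M" "\<forall>M' \<in> A. M \<subseteq> M' \<longrightarrow> M = M'"
    using finite_has_maximal2[of A H] by blast
  show ?thesis
  proof (rule that)
    show "subgroup M G" "H \<subseteq> M" "M \<noteq> carrier G"
      using M unfolding A_def by auto
    show "M' = M" if "subgroup M' G" "M \<subseteq> M'" "M' \<noteq> carrier G" for M'
      using M(2,3) that unfolding A_def by auto
  qed
qed

lemma pgroup_powers_exponent_dvd:
  assumes G: "finite (carrier G)" "order G = p ^ n" and p: "Factorial_Ring.prime p"
    and M: "subgroup M G" and x: "x \<in> carrier G" "x \<notin> M" and m: "m \<in> M" "m' \<in> M"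
    and eq: "x [^] (i::int) \<otimes> m = x [^] (j::int) \<otimes> m'"
  shows "int p dvd i - j"
proof (rule ccontr)
  assume nd: "\<not> int p dvd i - j"
  have mc: "m \<in> carrier G" "m' \<in> carrier G" using m subgroup.subset[OF M] by auto
  have "x [^] (i - j) = x [^] (- j) \<otimes> x [^] i"
    using int_pow_mult[OF x(1), of "- j" i] by simp
  also have "\<dots> = inv (x [^] j) \<otimes> (x [^] i \<otimes> m) \<otimes> inv m"
    using x(1) mc by (simp add: int_pow_neg m_assoc)
  also have "\<dots> = m' \<otimes> inv m"
    using eq x(1) mc by (simp add: m_assoc)
  finally have "x [^] (i - j) \<in> M"
    using m subgroup.m_closed[OF M] subgroup.m_inv_closed[OF M] by simp
  then show False
    using pgroup_mem_if_pow_mem[OF G p M x(1) _ nd] x(2) by blast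
qed

lemma pgroup_hom_to_Zp:
  assumes G: "finite (carrier G)" "order G = p ^ n" and p: "Factorial_Ring.prime p"
    and H: "subgroup H G" "H \<noteq> carrier G"
  shows "\<exists>k \<in> hom G (integer_mod_group p). (\<forall>h \<in> H. k h = 0) \<and> (\<exists>x \<in> carrier G. k x = 1)"
proof -
  have p2: "2 \<le> p" using p prime_ge_2_nat by blast
  obtain M where M: "subgroup M G" "H \<subseteq> M" "M \<noteq> carrier G"
    and maximal: "\<And>M'. subgroup M' G \<Longrightarrow> M \<subseteq> M' \<Longrightarrow> M' \<noteq> carrier G \<Longrightarrow> M' = M"
    using maximal_proper_subgroup[OF G(1) H] by blast
  have Msub: "M \<subseteq> carrier G" using subgroup.subset[OF M(1)] .
  obtain x where x: "x \<in> normalizer G M" "x \<notin> M"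
    using pgroup_normalizer_grows[OF G p M(1,3)] by blast
  have xc: "x \<in> carrier G" using x(1) unfolding normalizer_def stabilizer_def by simp
  define P where "P = {x [^] (i::int) \<otimes> m | i m. m \<in> M}"
  have pow_zero: "m = x [^] (0::int) \<otimes> m" if "m \<in> M" for m
    using that Msub by auto
  have pow_one: "x = x [^] (1::int) \<otimes> \<one>"
    using xc by simp
  have "M \<subseteq> P"
    unfolding P_def using pow_zero by blast
  have "x \<in> P"
    unfolding P_def using pow_one subgroup.one_closed[OF M(1)] by blast
  have cover: "carrier G = P"
  proof (rule ccontr)
    assume "carrier G \<noteq> P"
    then have "P = M"
      using maximal[OF powers_mult_subgroup[OF M(1) x(1)]] \<open>M \<subseteq> P\<close> unfolding P_def by simp
    then show False
      using x(2) \<open>x \<in> P\<close> by simp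
  qed
  define k where "k z = (SOME i::int. \<exists>m \<in> M. z = x [^] i \<otimes> m) mod int p" for z
  have k: "k (x [^] i \<otimes> m) = i mod int p" if m: "m \<in> M" for i m
  proof -
    define j where "j = (SOME j::int. \<exists>m' \<in> M. x [^] i \<otimes> m = x [^] j \<otimes> m')"
    have "\<exists>m' \<in> M. x [^] i \<otimes> m = x [^] j \<otimes> m'"
      unfolding j_def by (rule someI[of _ i]) (use m in blast)
    then obtain m' where "m' \<in> M" "x [^] j \<otimes> m' = x [^] i \<otimes> m"
      by auto
    then have "int p dvd j - i"
      using pgroup_powers_exponent_dvd[OF G p M(1) xc x(2) _ m] by blast
    then show ?thesis
      unfolding k_def j_def[symmetric] by (simp add: mod_eq_dvd_iff)
  qed
  have "k \<in> hom G (integer_mod_group p)"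
  proof (rule homI)
    show "k z \<in> carrier (integer_mod_group p)" for z
      unfolding k_def carrier_integer_mod_group using p2 by simp
    fix z w assume "z \<in> carrier G" "w \<in> carrier G"
    then obtain i m j m' where ij: "m \<in> M" "m' \<in> M" "z = x [^] (i::int) \<otimes> m" "w = x [^] (j::int) \<otimes> m'"
      using cover unfolding P_def by blast
    moreover obtain m'' where "m'' \<in> M" "z \<otimes> w = x [^] (i + j) \<otimes> m''"
      using powers_mult_closed[OF M(1) x(1) ij(1,2), of i j] ij(3,4) by blast
    ultimately show "k (z \<otimes> w) = k z \<otimes>\<^bsub>integer_mod_group p\<^esub> k w"
      by (simp add: k mod_add_eq)
  qed
  moreover have "\<forall>h \<in> H. k h = 0"
  proof
    fix h assume "h \<in> H"
    then have "h \<in> M" using M(2) by blast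
    then show "k h = 0"
      using k[of h 0] Msub by auto
  qed
  moreover have "k x = 1"
    using k[OF subgroup.one_closed[OF M(1)], of 1] pow_one p2 by simp
  ultimately show ?thesis
    using xc by blast
qed

lemma pgroup_two_independent_homs:
  assumes G: "finite (carrier G)" "order G = p ^ n" and p: "Factorial_Ring.prime p"
    and N: "subgroup N G" and not_cyclic: "\<And>g. g \<in> carrier G \<Longrightarrow> generate G (insert g N) \<noteq> carrier G"
  obtains k1 k2 a b where "k1 \<in> hom G (integer_mod_group p)" "k2 \<in> hom G (integer_mod_group p)"
    "\<forall>h \<in> N. k1 h = 0 \<and> k2 h = 0" "a \<in> carrier G" "b \<in> carrier G" "k1 a = 1" "k2 a = 0" "k2 b = 1"
proof -
  have Nsub: "N \<subseteq> carrier G" using subgroup.subset[OF N] .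
  have "N \<noteq> carrier G"
  proof
    assume "N = carrier G"
    then have "generate G (insert \<one> N) = carrier G"
      using generate_incl[of "insert \<one> N"] generate.incl[of _ "insert \<one> N" G] by auto
    then show False
      using not_cyclic[OF one_closed] by simp
  qed
  then obtain k1 a where k1: "k1 \<in> hom G (integer_mod_group p)" "\<forall>h \<in> N. k1 h = 0"
    "a \<in> carrier G" "k1 a = 1"
    using pgroup_hom_to_Zp[OF G p N] by blast
  have "subgroup (generate G (insert a N)) G"
    using generate_is_subgroup k1(3) Nsub by auto
  then obtain k2 b where k2: "k2 \<in> hom G (integer_mod_group p)"
    "\<forall>h \<in> generate G (insert a N). k2 h = 0" "b \<in> carrier G" "k2 b = 1"
    using pgroup_hom_to_Zp[OF G p _ not_cyclic[OF k1(3)]] by blast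
  have "insert a N \<subseteq> generate G (insert a N)"
    using generate.incl[of _ "insert a N" G] by blast
  then show ?thesis
    using k2(2) by (intro that[OF k1(1) k2(1) _ k1(3) k2(3) k1(4) _ k2(4)]) (auto simp: k1(2))
qed

end

section \<open>Centralizers and commutators\<close>

context group
begin

lemma subgroup_centralizerS:
  assumes H: "subgroup H G" and P: "P \<subseteq> carrier G"
  shows "subgroup (centralizerS G H P) G"
proof (rule subgroupI)
  have Hsub: "H \<subseteq> carrier G" using subgroup.subset[OF H] .
  show "centralizerS G H P \<subseteq> carrier G"
    unfolding centralizerS_def using Hsub by auto
  have "\<one> \<in> centralizerS G H P"
    unfolding centralizerS_def using subgroup.one_closed[OF H] P by auto
  then show "centralizerS G H P \<noteq> {}" by blast
  fix a assume a: "a \<in> centralizerS G H P"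
  then have ac: "a \<in> H" "a \<in> carrier G" using Hsub unfolding centralizerS_def by auto
  have "inv a \<otimes> x = x \<otimes> inv a" if x: "x \<in> P" for x
  proof -
    have "a \<otimes> x = x \<otimes> a" using a x unfolding centralizerS_def by blast
    then have "inv a \<otimes> (a \<otimes> x) \<otimes> inv a = inv a \<otimes> (x \<otimes> a) \<otimes> inv a" by simp
    then show ?thesis
      using ac x P by (auto simp: m_assoc)
  qed
  then show "inv a \<in> centralizerS G H P"
    unfolding centralizerS_def using subgroup.m_inv_closed[OF H ac(1)] by blast
next
  fix a b assume ab: "a \<in> centralizerS G H P" "b \<in> centralizerS G H P"
  have "a \<otimes> b \<otimes> x = x \<otimes> (a \<otimes> b)" if x: "x \<in> P" for x
  proof -
    have "a \<otimes> x = x \<otimes> a" "b \<otimes> x = x \<otimes> b" and c: "a \<in> carrier G" "b \<in> carrier G"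
      using ab x subgroup.subset[OF H] unfolding centralizerS_def by auto
    then show ?thesis
      using x P by (metis m_assoc subsetD)
  qed
  then show "a \<otimes> b \<in> centralizerS G H P"
    using ab subgroup.m_closed[OF H] unfolding centralizerS_def by blast
qed

lemma generate_commuting:
  assumes K: "K \<subseteq> carrier G" and comm: "\<And>x y. x \<in> K \<Longrightarrow> y \<in> K \<Longrightarrow> x \<otimes> y = y \<otimes> x"
    and xy: "x \<in> generate G K" "y \<in> generate G K"
  shows "x \<otimes> y = y \<otimes> x"
proof -
  have "generate G K \<subseteq> centralizerS G (carrier G) K"
    using comm K by (intro generate_subgroup_incl subgroup_centralizerS subgroup_self)
      (auto simp: centralizerS_def)
  then have "K \<subseteq> centralizerS G (carrier G) (generate G K)"
    using K unfolding centralizerS_def by (auto simp: subsetD)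
  then have "generate G K \<subseteq> centralizerS G (carrier G) (generate G K)"
    using generate_incl[OF K] K by (intro generate_subgroup_incl subgroup_centralizerS subgroup_self)
  then show ?thesis
    using xy unfolding centralizerS_def by blast
qed

definition commutator :: "'a \<Rightarrow> 'a \<Rightarrow> 'a" where
  "commutator x y = x \<otimes> y \<otimes> inv x \<otimes> inv y"

lemma commutator_closed [simp]: "x \<in> carrier G \<Longrightarrow> y \<in> carrier G \<Longrightarrow> commutator x y \<in> carrier G"
  unfolding commutator_def by simp

lemma commutator_self: "x \<in> carrier G \<Longrightarrow> commutator x x = \<one>"
  unfolding commutator_def by (simp add: m_assoc)

lemma commutator_swap: "x \<in> carrier G \<Longrightarrow> y \<in> carrier G \<Longrightarrow> commutator y x = inv (commutator x y)"
  unfolding commutator_def by (rule inv_equality[symmetric]) (simp_all add: m_assoc)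

lemma commutator_commuting:
  assumes "x \<in> carrier G" "y \<in> carrier G" "x \<otimes> y = y \<otimes> x"
  shows "commutator x y = \<one>"
  using assms unfolding commutator_def by (simp add: m_assoc)

lemma derived_set_eq: "derived_set G V = {commutator x y | x y. x \<in> V \<and> y \<in> V}"
  unfolding commutator_def by blast

lemma Zp_hom_commutator:
  assumes l: "l \<in> Zp_hom p G H" and H: "subgroup H G" and xy: "x \<in> H" "y \<in> H"
  shows "l (commutator x y) = 0"
proof -
  have c: "inv x \<in> H" "inv y \<in> H" "x \<otimes> y \<in> H" "x \<otimes> y \<otimes> inv x \<in> H"
    using xy subgroup.m_inv_closed[OF H] subgroup.m_closed[OF H] by auto
  have "l (commutator x y) = (((l x + l y) mod int p + (- l x) mod int p) mod int p + (- l y) mod int p) mod int p"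
    unfolding commutator_def
    using Zp_hom_mult[OF l c(4) c(2)] Zp_hom_mult[OF l c(3) c(1)] Zp_hom_mult[OF l xy]
      Zp_hom_inv[OF l H xy(1)] Zp_hom_inv[OF l H xy(2)] by simp
  also have "\<dots> = 0"
    by (simp add: mod_add_left_eq mod_add_right_eq mod_diff_left_eq)
  finally show ?thesis .
qed

lemma commutator_mult_left:
  assumes xyz: "x \<in> carrier G" "y \<in> carrier G" "z \<in> carrier G"
    and central: "commutator y z \<otimes> x = x \<otimes> commutator y z"
      "commutator y z \<otimes> commutator x z = commutator x z \<otimes> commutator y z"
  shows "commutator (x \<otimes> y) z = commutator x z \<otimes> commutator y z"
proof -
  have "commutator (x \<otimes> y) z = x \<otimes> commutator y z \<otimes> (z \<otimes> inv x \<otimes> inv z)"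
    using xyz unfolding commutator_def by (simp add: m_assoc inv_mult_group)
  also have "\<dots> = commutator y z \<otimes> x \<otimes> (z \<otimes> inv x \<otimes> inv z)"
    using central(1) by simp
  also have "\<dots> = commutator y z \<otimes> commutator x z"
    using xyz unfolding commutator_def by (simp add: m_assoc)
  finally show ?thesis
    using central(2) by simp
qed

lemma commutator_mult_right:
  assumes xyz: "x \<in> carrier G" "y \<in> carrier G" "z \<in> carrier G"
    and central: "commutator x z \<otimes> inv y = inv y \<otimes> commutator x z"
  shows "commutator x (y \<otimes> z) = commutator x y \<otimes> commutator x z"
proof -
  have "commutator x (y \<otimes> z) = x \<otimes> y \<otimes> inv x \<otimes> (commutator x z \<otimes> inv y)"
    using xyz unfolding commutator_def by (simp add: m_assoc inv_mult_group)
  also have "\<dots> = commutator x y \<otimes> commutator x z"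
    using xyz central unfolding commutator_def by (simp add: m_assoc)
  finally show ?thesis .
qed

lemma centralizer_cover_restrict:
  assumes E: "E \<subseteq> carrier G" and V: "subgroup V G" "T \<subseteq> V" "V \<subseteq> centralizerS G E T <#> T"
  shows "V \<subseteq> centralizerS G V T <#> T"
proof
  fix v assume v: "v \<in> V"
  then obtain c t where ct: "c \<in> centralizerS G E T" "t \<in> T" "v = c \<otimes> t"
    using V(3) unfolding set_mult_def by blast
  have c: "c \<in> carrier G" "t \<in> carrier G"
    using ct(1,2) E V(2) subgroup.subset[OF V(1)] unfolding centralizerS_def by auto
  then have "c = v \<otimes> inv t"
    using ct(3) by (simp add: m_assoc)
  then have "c \<in> V"
    using v ct(2) V(2) subgroup.m_closed[OF V(1)] subgroup.m_inv_closed[OF V(1)] by auto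
  then have "c \<in> centralizerS G V T"
    using ct(1) unfolding centralizerS_def by blast
  then show "v \<in> centralizerS G V T <#> T"
    using ct(2,3) unfolding set_mult_def by blast
qed

end

section \<open>Automorphisms of a subgroup in a fusion system\<close>

locale fusion_subgroup = group S for S :: "('a, 'b) monoid_scheme" (structure) +
  fixes F :: "'a set \<Rightarrow> 'a set \<Rightarrow> ('a \<Rightarrow> 'a) set" and E :: "'a set"
  assumes fusion: "fusion_system S F" and E: "subgroup E S" and fin: "finite (carrier S)"
begin

lemma E_sub: "E \<subseteq> carrier S"
  using subgroup.subset[OF E] .

lemma Aut_F_props:
  assumes "\<alpha> \<in> F E E"
  shows "\<alpha> \<in> extensional E" "\<alpha> ` E \<subseteq> E" "inj_on \<alpha> E"
    "\<And>x y. x \<in> E \<Longrightarrow> y \<in> E \<Longrightarrow> \<alpha> (x \<otimes> y) = \<alpha> x \<otimes> \<alpha> y"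
proof -
  have "\<alpha> \<in> inj_homs S E E"
    using fusion E assms unfolding fusion_system_def by blast
  then show "\<alpha> \<in> extensional E" "\<alpha> ` E \<subseteq> E" "inj_on \<alpha> E"
    "\<And>x y. x \<in> E \<Longrightarrow> y \<in> E \<Longrightarrow> \<alpha> (x \<otimes> y) = \<alpha> x \<otimes> \<alpha> y"
    unfolding inj_homs_def by auto
qed

lemma Aut_F_image: "\<alpha> \<in> F E E \<Longrightarrow> \<alpha> ` E = E"
  using Aut_F_props[of \<alpha>] finite_subset[OF E_sub fin] endo_inj_surj by blast

lemma Aut_F_group_hom: "\<alpha> \<in> F E E \<Longrightarrow> group_hom (S\<lparr>carrier := E\<rparr>) (S\<lparr>carrier := E\<rparr>) \<alpha>"
  using Aut_F_props[of \<alpha>] subgroup_imp_group[OF E]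
  by (auto simp: group_hom_def group_hom_axioms_def hom_def)

lemma Aut_F_inv: "\<alpha> \<in> F E E \<Longrightarrow> g \<in> E \<Longrightarrow> \<alpha> (inv g) = inv (\<alpha> g)"
  using group_hom.hom_inv[OF Aut_F_group_hom, of \<alpha> g] Aut_F_props(2)[of \<alpha>] E by auto

lemma Aut_F_comp: "\<alpha> \<in> F E E \<Longrightarrow> \<beta> \<in> F E E \<Longrightarrow> restrict (\<alpha> \<circ> \<beta>) E \<in> F E E"
  using fusion unfolding fusion_system_def by blast

lemma Aut_F_inv_into: "\<alpha> \<in> F E E \<Longrightarrow> restrict (inv_into E \<alpha>) E \<in> F E E"
  using fusion Aut_F_image unfolding fusion_system_def by metis

lemma conjmap_Aut_F: "g \<in> E \<Longrightarrow> conjmap S g E \<in> F E E"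
proof -
  assume g: "g \<in> E"
  have "conjmap S g E ` E \<subseteq> E"
    unfolding conjmap_def using g subgroup.m_closed[OF E] subgroup.m_inv_closed[OF E] by auto
  then have "conjmap S g E \<in> HomS S E E"
    unfolding HomS_def using g E_sub by blast
  then show ?thesis
    using fusion E unfolding fusion_system_def by blast
qed

lemma conjmap_one: "conjmap S \<one> E = restrict id E"
  unfolding conjmap_def using E_sub by (intro ext) auto

lemma conjmap_comp:
  assumes "g \<in> E" "h \<in> E"
  shows "restrict (conjmap S g E \<circ> conjmap S h E) E = conjmap S (h \<otimes> g) E"
proof
  fix e
  have gh: "g \<in> carrier S" "h \<in> carrier S" using assms E_sub by auto
  show "restrict (conjmap S g E \<circ> conjmap S h E) E e = conjmap S (h \<otimes> g) E e"
  proof (cases "e \<in> E")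
    case True
    have "inv h \<otimes> e \<otimes> h \<in> E"
      using True assms subgroup.m_closed[OF E] subgroup.m_inv_closed[OF E] by auto
    then show ?thesis
      using True gh E_sub unfolding conjmap_def by (auto simp: m_assoc inv_mult_group)
  qed (simp add: conjmap_def)
qed

lemma AutF_simps [simp]:
  "carrier (AutF S F E) = F E E" "\<one>\<^bsub>AutF S F E\<^esub> = restrict id E"
  "\<alpha> \<otimes>\<^bsub>AutF S F E\<^esub> \<beta> = restrict (\<alpha> \<circ> \<beta>) E"
  unfolding AutF_def by simp_all

lemma restrict_inv_into_comp:
  assumes "\<alpha> \<in> F E E"
  shows "restrict (restrict (inv_into E \<alpha>) E \<circ> \<alpha>) E = restrict id E"
proof
  fix e show "restrict (restrict (inv_into E \<alpha>) E \<circ> \<alpha>) E e = restrict id E e"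
    using Aut_F_props(2,3)[OF assms] by (auto simp: inv_into_f_f)
qed

lemma AutF_group: "group (AutF S F E)"
proof (rule groupI)
  fix \<alpha> \<beta> \<gamma> assume abc: "\<alpha> \<in> carrier (AutF S F E)" "\<beta> \<in> carrier (AutF S F E)" "\<gamma> \<in> carrier (AutF S F E)"
  then show "\<alpha> \<otimes>\<^bsub>AutF S F E\<^esub> \<beta> \<in> carrier (AutF S F E)"
    using Aut_F_comp by simp
  have "\<gamma> e \<in> E" if "e \<in> E" for e
    using Aut_F_props(2) abc(3) that by auto
  then show "\<alpha> \<otimes>\<^bsub>AutF S F E\<^esub> \<beta> \<otimes>\<^bsub>AutF S F E\<^esub> \<gamma> = \<alpha> \<otimes>\<^bsub>AutF S F E\<^esub> (\<beta> \<otimes>\<^bsub>AutF S F E\<^esub> \<gamma>)"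
    by (auto simp: restrict_def)
next
  show "\<one>\<^bsub>AutF S F E\<^esub> \<in> carrier (AutF S F E)"
    using conjmap_Aut_F[OF subgroup.one_closed[OF E]] conjmap_one by simp
next
  fix \<alpha> assume "\<alpha> \<in> carrier (AutF S F E)"
  then have \<alpha>: "\<alpha> \<in> F E E" by simp
  have "restrict (restrict id E \<circ> \<alpha>) E e = \<alpha> e" for e
  proof (cases "e \<in> E")
    case True
    then have "\<alpha> e \<in> E" using Aut_F_props(2)[OF \<alpha>] by blast
    with True show ?thesis by simp
  next
    case False
    then show ?thesis using extensional_arb[OF Aut_F_props(1)[OF \<alpha>] False] by simp
  qed
  then show "\<one>\<^bsub>AutF S F E\<^esub> \<otimes>\<^bsub>AutF S F E\<^esub> \<alpha> = \<alpha>"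
    by auto
  show "\<exists>\<beta> \<in> carrier (AutF S F E). \<beta> \<otimes>\<^bsub>AutF S F E\<^esub> \<alpha> = \<one>\<^bsub>AutF S F E\<^esub>"
    using Aut_F_inv_into[OF \<alpha>] restrict_inv_into_comp[OF \<alpha>] by auto
qed

lemma AutF_inv: "\<alpha> \<in> F E E \<Longrightarrow> inv\<^bsub>AutF S F E\<^esub> \<alpha> = restrict (inv_into E \<alpha>) E"
  using group.inv_equality[OF AutF_group] Aut_F_inv_into restrict_inv_into_comp by simp

lemma Inn_subgroup: "subgroup (Inn S E) (AutF S F E)"
proof (rule group.subgroupI[OF AutF_group])
  show "Inn S E \<subseteq> carrier (AutF S F E)"
    unfolding Inn_def using conjmap_Aut_F by auto
  show "Inn S E \<noteq> {}"
    unfolding Inn_def using subgroup.one_closed[OF E] by blast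
next
  fix \<alpha> assume "\<alpha> \<in> Inn S E"
  then obtain g where g: "g \<in> E" "\<alpha> = conjmap S g E" unfolding Inn_def by blast
  have gi: "inv g \<in> E" using subgroup.m_inv_closed[OF E g(1)] .
  have "conjmap S (inv g) E \<otimes>\<^bsub>AutF S F E\<^esub> \<alpha> = \<one>\<^bsub>AutF S F E\<^esub>"
    using conjmap_comp[OF gi g(1)] g E_sub conjmap_one by auto
  then have "inv\<^bsub>AutF S F E\<^esub> \<alpha> = conjmap S (inv g) E"
    using group.inv_equality[OF AutF_group] conjmap_Aut_F[OF gi] conjmap_Aut_F[OF g(1)] g(2) by simp
  then show "inv\<^bsub>AutF S F E\<^esub> \<alpha> \<in> Inn S E"
    unfolding Inn_def using gi by blast
next
  fix \<alpha> \<beta> assume "\<alpha> \<in> Inn S E" "\<beta> \<in> Inn S E"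
  then obtain g h where "g \<in> E" "\<alpha> = conjmap S g E" "h \<in> E" "\<beta> = conjmap S h E"
    unfolding Inn_def by blast
  then show "\<alpha> \<otimes>\<^bsub>AutF S F E\<^esub> \<beta> \<in> Inn S E"
    using conjmap_comp subgroup.m_closed[OF E] unfolding Inn_def by auto
qed

lemma Aut_F_conj_conjmap:
  assumes \<alpha>: "\<alpha> \<in> F E E" and g: "g \<in> E"
  shows "restrict (restrict (\<alpha> \<circ> conjmap S g E) E \<circ> restrict (inv_into E \<alpha>) E) E = conjmap S (\<alpha> g) E"
proof
  fix e show "restrict (restrict (\<alpha> \<circ> conjmap S g E) E \<circ> restrict (inv_into E \<alpha>) E) E e = conjmap S (\<alpha> g) E e"
  proof (cases "e \<in> E")
    case True
    define e' where "e' = inv_into E \<alpha> e"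
    have e': "e' \<in> E" "\<alpha> e' = e"
      unfolding e'_def using True Aut_F_image[OF \<alpha>] by (auto intro: inv_into_into simp: f_inv_into_f)
    have gi: "inv g \<in> E" using subgroup.m_inv_closed[OF E g] .
    have ge: "inv g \<otimes> e' \<in> E" "inv g \<otimes> e' \<otimes> g \<in> E"
      using subgroup.m_closed[OF E] gi e'(1) g by auto
    have "\<alpha> (inv g \<otimes> e' \<otimes> g) = inv (\<alpha> g) \<otimes> e \<otimes> \<alpha> g"
      using Aut_F_props(4)[OF \<alpha> ge(1) g] Aut_F_props(4)[OF \<alpha> gi e'(1)] Aut_F_inv[OF \<alpha> g] e'(2) by simp
    then show ?thesis
      using True e' ge by (simp add: conjmap_def e'_def[symmetric])
  qed (simp add: conjmap_def)
qed

lemma Inn_normal: "Inn S E \<lhd> AutF S F E"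
  unfolding group.normal_inv_iff[OF AutF_group]
proof (intro conjI ballI)
  show "subgroup (Inn S E) (AutF S F E)" by (rule Inn_subgroup)
next
  fix \<alpha> c assume "\<alpha> \<in> carrier (AutF S F E)" "c \<in> Inn S E"
  then obtain g where \<alpha>: "\<alpha> \<in> F E E" and g: "g \<in> E" "c = conjmap S g E" unfolding Inn_def by auto
  have "\<alpha> g \<in> E" using Aut_F_props(2)[OF \<alpha>] g(1) by blast
  then show "\<alpha> \<otimes>\<^bsub>AutF S F E\<^esub> c \<otimes>\<^bsub>AutF S F E\<^esub> inv\<^bsub>AutF S F E\<^esub> \<alpha> \<in> Inn S E"
    using Aut_F_conj_conjmap[OF \<alpha> g(1)] AutF_inv[OF \<alpha>] g(2) unfolding Inn_def by auto
qed

lemma OutF_group: "group (OutF S F E)"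
  unfolding OutF_def using normal.factorgroup_is_group[OF Inn_normal] .

lemma mem_Opprime_OutF_imp_Aut_F:
  assumes "C \<in> Opprime p (OutF S F E)" "\<alpha> \<in> C"
  shows "\<alpha> \<in> F E E"
proof -
  have "Opprime p (OutF S F E) \<subseteq> carrier (OutF S F E)"
    unfolding Opprime_def by (rule group.generate_incl[OF OutF_group]) auto
  then have "C \<in> rcosets\<^bsub>AutF S F E\<^esub> (Inn S E)"
    using assms(1) unfolding OutF_def FactGroup_def by auto
  then have "C \<subseteq> carrier (AutF S F E)"
    by (rule subgroup.rcosets_carrier[OF Inn_subgroup AutF_group])
  then show ?thesis
    using assms(2) by auto
qed

end

section \<open>The rank three natural module\<close>

locale rank3_natural_module = group S for S :: "('a, 'b) monoid_scheme" (structure) +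
  fixes p :: nat and V T :: "'a set" and \<theta>1 \<theta>2 :: "'a \<Rightarrow> int" and \<alpha> :: "'a \<Rightarrow> 'a"
  assumes finite: "finite (carrier S)" and p: "Factorial_Ring.prime p" "odd p"
    and order: "\<exists>n. order S = p ^ n"
    and V: "subgroup V S" and T: "subgroup T S" "T \<subseteq> V"
    and \<theta>: "\<theta>1 \<in> Zp_hom p S V" "\<theta>2 \<in> Zp_hom p S V"
    and \<theta>_kernel: "\<And>v. v \<in> V \<Longrightarrow> \<theta>1 v = 0 \<and> \<theta>2 v = 0 \<longleftrightarrow> v \<in> T"
    and \<theta>_onto: "\<And>a b. a \<in> {0..<int p} \<Longrightarrow> b \<in> {0..<int p} \<Longrightarrow> \<exists>v \<in> V. \<theta>1 v = a \<and> \<theta>2 v = b"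
    and rank_V: "rank S V \<le> 3"
    and V_cover: "V \<subseteq> centralizerS S V T <#> T"
    and \<alpha>: "\<alpha> \<in> hom (S\<lparr>carrier := V\<rparr>) (S\<lparr>carrier := V\<rparr>)"
    and \<alpha>_T: "\<And>t. t \<in> T \<Longrightarrow> \<alpha> t = t"
    and \<alpha>_inverts: "\<And>v. v \<in> V \<Longrightarrow> \<theta>1 (\<alpha> v) = (- \<theta>1 v) mod int p \<and> \<theta>2 (\<alpha> v) = (- \<theta>2 v) mod int p"
begin

lemma p_gt_1: "1 < p"
  using p(1) prime_gt_1_nat by blast

lemma V_sub: "V \<subseteq> carrier S"
  using subgroup.subset[OF V] .

lemma T_sub: "T \<subseteq> carrier S"
  using subgroup.subset[OF T(1)] .

lemma T_group: "group (S\<lparr>carrier := T\<rparr>)"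
  using subgroup_imp_group[OF T(1)] .

lemma order_T: "\<exists>k. order (S\<lparr>carrier := T\<rparr>) = p ^ k"
  using order card_subgroup_prime_power[OF _ p(1) T(1)] unfolding order_def by fastforce

lemma \<theta>_T: "t \<in> T \<Longrightarrow> \<theta>1 t = 0 \<and> \<theta>2 t = 0"
  using \<theta>_kernel T(2) by blast

lemma pow_in_V: "x \<in> V \<Longrightarrow> x [^] (n::nat) \<in> V"
  using subgroup_int_pow_closed[OF V, of x "int n"] by (simp add: int_pow_int)

lemma basis:
  obtains v1 v2 where "v1 \<in> V" "v2 \<in> V" "\<theta>1 v1 = 1" "\<theta>2 v1 = 0" "\<theta>1 v2 = 0" "\<theta>2 v2 = 1"
proof -
  have range: "1 \<in> {0..<int p}" "0 \<in> {0..<int p}" using p_gt_1 by auto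
  obtain v1 where "v1 \<in> V" "\<theta>1 v1 = 1" "\<theta>2 v1 = 0" using \<theta>_onto[OF range] by blast
  moreover obtain v2 where "v2 \<in> V" "\<theta>1 v2 = 0" "\<theta>2 v2 = 1" using \<theta>_onto[OF range(2,1)] by blast
  ultimately show ?thesis using that by blast
qed

lemma no_independent_pair_on_T:
  assumes l: "l3 \<in> Zp_hom p S V" "l4 \<in> Zp_hom p S V" and ab: "a \<in> T" "b \<in> T"
    and val: "l3 a = 1" "l4 a = 0" "l4 b = 1"
  shows False
proof -
  obtain v1 v2 where v: "v1 \<in> V" "v2 \<in> V" "\<theta>1 v1 = 1" "\<theta>2 v1 = 0" "\<theta>1 v2 = 0" "\<theta>2 v2 = 1"
    using basis .
  have abV: "a \<in> V" "b \<in> V" using ab T(2) by auto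
  have "4 \<le> rank S V"
    using four_le_rank_if_triangular[OF V finite_subset[OF V_sub finite] p_gt_1 \<theta> l v(1,2) abV v(3) v(5,6)
      conjunct1[OF \<theta>_T[OF ab(1)]] conjunct2[OF \<theta>_T[OF ab(1)]] val(1,2)
      conjunct1[OF \<theta>_T[OF ab(2)]] conjunct2[OF \<theta>_T[OF ab(2)]] val(3)] .
  then show False
    using rank_V by simp
qed

lemma quotient_of_T_cyclic:
  assumes N: "subgroup N S" "N \<subseteq> T" and f: "\<And>t. t \<in> T \<Longrightarrow> f t \<in> T"
    and extend: "\<And>k. k \<in> Zp_hom p S T \<Longrightarrow> \<forall>h \<in> N. k h = 0 \<Longrightarrow> \<exists>\<chi> \<in> Zp_hom p S V. \<forall>t \<in> T. \<chi> (f t) = k t"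
  shows "\<exists>g \<in> T. generate S (insert g N) = T"
proof (rule ccontr)
  assume not_cyclic: "\<not> (\<exists>g \<in> T. generate S (insert g N) = T)"
  have nc: "generate (S\<lparr>carrier := T\<rparr>) (insert g N) \<noteq> carrier (S\<lparr>carrier := T\<rparr>)"
    if "g \<in> carrier (S\<lparr>carrier := T\<rparr>)" for g
    using not_cyclic that generate_consistent[OF _ T(1), of "insert g N"] N(2) by auto
  obtain n where n: "order (S\<lparr>carrier := T\<rparr>) = p ^ n"
    using order_T by blast
  have NT: "subgroup N (S\<lparr>carrier := T\<rparr>)"
    using subgroup_incl[OF N(1) T(1) N(2)] .
  have fin: "finite (carrier (S\<lparr>carrier := T\<rparr>))"
    using finite_subset[OF T_sub finite] by simp
  obtain k1 k2 a b where k: "k1 \<in> Zp_hom p S T" "k2 \<in> Zp_hom p S T"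
    "\<forall>h \<in> N. k1 h = 0 \<and> k2 h = 0" and ab: "a \<in> carrier (S\<lparr>carrier := T\<rparr>)"
    "b \<in> carrier (S\<lparr>carrier := T\<rparr>)" "k1 a = 1" "k2 a = 0" "k2 b = 1"
    by (rule group.pgroup_two_independent_homs[OF T_group fin n p(1) NT nc])
  obtain \<chi>1 \<chi>2 where "\<chi>1 \<in> Zp_hom p S V" "\<chi>2 \<in> Zp_hom p S V"
    "\<forall>t \<in> T. \<chi>1 (f t) = k1 t" "\<forall>t \<in> T. \<chi>2 (f t) = k2 t"
    using extend[OF k(1)] extend[OF k(2)] k(3) by blast
  then show False
    using no_independent_pair_on_T[of \<chi>1 \<chi>2 "f a" "f b"] f ab by simp
qed

lemma V_decomp:
  assumes "v \<in> V"
  obtains c t where "c \<in> centralizerS S V T" "t \<in> T" "v = c \<otimes> t"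
  using V_cover assms unfolding set_mult_def by blast

lemma extend_through_centralizer:
  assumes k: "k \<in> Zp_hom p S T" and k_center: "\<forall>z \<in> centralizerS S T T. k z = 0"
  shows "\<exists>\<chi> \<in> Zp_hom p S V. \<forall>t \<in> T. \<chi> t = k t"
proof -
  define C where "C = centralizerS S (carrier S) T"
  have C: "subgroup C S"
    unfolding C_def using subgroup_centralizerS[OF subgroup_self T_sub] .
  have C_comm: "c \<otimes> t = t \<otimes> c" if "c \<in> C" "t \<in> T" for c t
    using that unfolding C_def centralizerS_def by blast
  have p0: "0 < p" using p_gt_1 by simp
  have cover: "\<exists>t. t \<in> T \<and> v \<otimes> inv t \<in> C" if v: "v \<in> V" for v
  proof -
    obtain c t where ct: "c \<in> centralizerS S V T" "t \<in> T" "v = c \<otimes> t"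
      using V_decomp[OF v] .
    then have "c \<in> C" "c \<in> carrier S" "t \<in> carrier S"
      using V_sub T_sub unfolding C_def centralizerS_def by auto
    then have "v \<otimes> inv t \<in> C"
      using ct(3) by (simp add: m_assoc)
    then show ?thesis
      using ct(2) by blast
  qed
  define \<tau> where "\<tau> v = (SOME t. t \<in> T \<and> v \<otimes> inv t \<in> C)" for v
  have \<tau>: "\<tau> v \<in> T" "v \<otimes> inv (\<tau> v) \<in> C" if "v \<in> V" for v
    using someI_ex[of "\<lambda>t. t \<in> T \<and> v \<otimes> inv t \<in> C", OF cover[OF that]] unfolding \<tau>_def by simp_all
  have k_unique: "k t = k t'"
    if v: "v \<in> V" and t: "t \<in> T" "v \<otimes> inv t \<in> C" and t': "t' \<in> T" "v \<otimes> inv t' \<in> C" for v t t'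
  proof -
    have c: "v \<in> carrier S" "t \<in> carrier S" "t' \<in> carrier S" using v t t' V_sub T_sub by auto
    have "t \<otimes> inv t' = inv (v \<otimes> inv t) \<otimes> (v \<otimes> inv t')"
      using c by (simp add: inv_mult_group m_assoc)
    then have "t \<otimes> inv t' \<in> C"
      using subgroup.m_closed[OF C subgroup.m_inv_closed[OF C t(2)] t'(2)] by simp
    moreover have tt': "t \<otimes> inv t' \<in> T"
      using subgroup.m_closed[OF T(1) t(1) subgroup.m_inv_closed[OF T(1) t'(1)]] .
    ultimately have "k (t \<otimes> inv t') = 0"
      using k_center unfolding C_def centralizerS_def by blast
    moreover have "t = (t \<otimes> inv t') \<otimes> t'"
      using c by (simp add: m_assoc)
    ultimately show ?thesis
      using Zp_hom_mult[OF k tt' t'(1)] Zp_hom_mod[OF k p0 t'(1)] by simp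
  qed
  have hom: "(\<lambda>v. k (\<tau> v)) \<in> Zp_hom p S V"
  proof (rule Zp_homI[OF _ _ p0])
    show "k (\<tau> v) \<in> {0..<int p}" if "v \<in> V" for v
      using Zp_hom_range[OF k p0 \<tau>(1)[OF that]] by simp
    fix v w assume vw: "v \<in> V" "w \<in> V"
    have c: "v \<in> carrier S" "w \<in> carrier S" "\<tau> v \<in> carrier S" "\<tau> w \<in> carrier S"
      using vw \<tau>(1) V_sub T_sub by auto
    define x where "x = w \<otimes> inv (\<tau> w)"
    have x: "x \<in> C" "x \<in> carrier S"
      unfolding x_def using \<tau>(2)[OF vw(2)] c by auto
    have "v \<otimes> w \<otimes> inv (\<tau> v \<otimes> \<tau> w) = (v \<otimes> inv (\<tau> v)) \<otimes> (\<tau> v \<otimes> x \<otimes> inv (\<tau> v))"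
      unfolding x_def using c by (simp add: m_assoc inv_mult_group)
    also have "\<tau> v \<otimes> x = x \<otimes> \<tau> v"
      using C_comm[OF x(1) \<tau>(1)[OF vw(1)]] by simp
    also have "x \<otimes> \<tau> v \<otimes> inv (\<tau> v) = x"
      using x(2) c by (simp add: m_assoc)
    finally have in_C: "v \<otimes> w \<otimes> inv (\<tau> v \<otimes> \<tau> w) \<in> C"
      using subgroup.m_closed[OF C \<tau>(2)[OF vw(1)] x(1)] by simp
    have in_T: "\<tau> v \<otimes> \<tau> w \<in> T"
      using subgroup.m_closed[OF T(1) \<tau>(1)[OF vw(1)] \<tau>(1)[OF vw(2)]] .
    have vw_V: "v \<otimes> w \<in> V"
      using subgroup.m_closed[OF V vw] .
    have "k (\<tau> (v \<otimes> w)) = k (\<tau> v \<otimes> \<tau> w)"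
      using k_unique[OF vw_V \<tau>[OF vw_V] in_T in_C] .
    then show "k (\<tau> (v \<otimes> w)) = (k (\<tau> v) + k (\<tau> w)) mod int p"
      using Zp_hom_mult[OF k \<tau>(1)[OF vw(1)] \<tau>(1)[OF vw(2)]] by simp
  qed
  have "k (\<tau> t) = k t" if t: "t \<in> T" for t
  proof -
    have tV: "t \<in> V" using t T(2) by blast
    have "t \<otimes> inv t \<in> C"
      using t T_sub subgroup.one_closed[OF C] by auto
    then show ?thesis
      by (rule k_unique[OF tV \<tau>[OF tV] t])
  qed
  then show ?thesis
    by (intro bexI[OF _ hom]) simp
qed

lemma T_abelian: "\<forall>x \<in> T. \<forall>y \<in> T. x \<otimes> y = y \<otimes> x"
proof -
  define Z where "Z = centralizerS S T T"
  have Z: "subgroup Z S" "Z \<subseteq> T"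
    unfolding Z_def using subgroup_centralizerS[OF T(1) T_sub] by (auto simp: centralizerS_def)
  obtain g where g: "g \<in> T" "generate S (insert g Z) = T"
    using quotient_of_T_cyclic[OF Z, of id] extend_through_centralizer unfolding Z_def by auto
  have comm: "x \<otimes> y = y \<otimes> x" if "x \<in> insert g Z" "y \<in> insert g Z" for x y
    using that g(1) Z(2) unfolding Z_def centralizerS_def by auto
  have "insert g Z \<subseteq> carrier S"
    using g(1) Z(2) T_sub by auto
  then show ?thesis
    using generate_commuting[OF _ comm] g(2) by blast
qed

lemma T_central: "t \<in> T \<Longrightarrow> v \<in> V \<Longrightarrow> t \<otimes> v = v \<otimes> t"
proof -
  assume t: "t \<in> T" and v: "v \<in> V"
  obtain c t' where ct: "c \<in> centralizerS S V T" "t' \<in> T" "v = c \<otimes> t'"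
    using V_decomp[OF v] .
  have c: "c \<in> carrier S" "t \<in> carrier S" "t' \<in> carrier S"
    using ct(1,2) t V_sub T_sub unfolding centralizerS_def by auto
  have "t \<otimes> v = (t \<otimes> c) \<otimes> t'"
    using ct(3) c by (simp add: m_assoc)
  also have "t \<otimes> c = c \<otimes> t"
    using ct(1) t unfolding centralizerS_def by simp
  also have "c \<otimes> t \<otimes> t' = c \<otimes> (t' \<otimes> t)"
    using T_abelian t ct(2) c by (simp add: m_assoc)
  also have "\<dots> = v \<otimes> t"
    using ct(3) c by (simp add: m_assoc)
  finally show ?thesis .
qed

lemma commutator_in_T:
  assumes "x \<in> V" "y \<in> V"
  shows "commutator x y \<in> T"
proof -
  have "commutator x y \<in> V"
    unfolding commutator_def using assms subgroup.m_closed[OF V] subgroup.m_inv_closed[OF V] by simp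
  then show ?thesis
    using \<theta>_kernel Zp_hom_commutator[OF \<theta>(1) V assms] Zp_hom_commutator[OF \<theta>(2) V assms] by blast
qed

lemma derived_subset_T: "derived S V \<subseteq> T"
  unfolding derived_def derived_set_eq using commutator_in_T
  by (intro generate_subgroup_incl[OF _ T(1)]) blast

lemma commutator_central: "x \<in> V \<Longrightarrow> y \<in> V \<Longrightarrow> z \<in> V \<Longrightarrow> commutator x y \<otimes> z = z \<otimes> commutator x y"
  using T_central commutator_in_T by blast

lemma commutator_mult_left_V:
  assumes "x \<in> V" "y \<in> V" "z \<in> V"
  shows "commutator (x \<otimes> y) z = commutator x z \<otimes> commutator y z"
  using assms commutator_mult_left[of x y z] commutator_central T_abelian commutator_in_T V_sub
  by (meson subsetD)

lemma commutator_mult_right_V: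
  assumes "x \<in> V" "y \<in> V" "z \<in> V"
  shows "commutator x (y \<otimes> z) = commutator x y \<otimes> commutator x z"
  using assms commutator_mult_right[of x y z] commutator_central subgroup.m_inv_closed[OF V] V_sub
  by (meson subsetD)

lemma commutator_pow_left_V:
  assumes "x \<in> V" "z \<in> V"
  shows "commutator (x [^] (n::nat)) z = commutator x z [^] n"
proof (induction n)
  case (Suc n)
  then show ?case
    using commutator_mult_left_V[OF pow_in_V[OF assms(1)] assms] assms V_sub by auto
qed (use assms V_sub in \<open>auto simp: commutator_def\<close>)

lemma commutator_pow_right_V:
  assumes "x \<in> V" "z \<in> V"
  shows "commutator z (x [^] (n::nat)) = commutator z x [^] n"
proof (induction n)
  case (Suc n)
  then show ?case
    using commutator_mult_right_V[OF assms(2) pow_in_V[OF assms(1)] assms(1)] assms V_sub by auto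
qed (use assms V_sub in \<open>auto simp: commutator_def m_assoc\<close>)

lemma commutator_T: "t \<in> T \<Longrightarrow> z \<in> V \<Longrightarrow> commutator t z = \<one> \<and> commutator z t = \<one>"
  using commutator_commuting T_central T(2) V_sub by (metis subsetD)

lemma V_basis_decomp:
  assumes v: "v1 \<in> V" "v2 \<in> V" "\<theta>1 v1 = 1" "\<theta>2 v1 = 0" "\<theta>1 v2 = 0" "\<theta>2 v2 = 1"
    and w: "w \<in> V"
  obtains t a b where "t \<in> T" "w = v1 [^] (a::nat) \<otimes> v2 [^] (b::nat) \<otimes> t"
proof -
  define a b where "a = nat (\<theta>1 w)" and "b = nat (\<theta>2 w)"
  define u where "u = v1 [^] a \<otimes> v2 [^] b"
  have u: "u \<in> V"
    unfolding u_def using pow_in_V v(1,2) subgroup.m_closed[OF V] by blast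
  have p0: "0 < p" using p_gt_1 by simp
  have ab: "int a = \<theta>1 w" "int b = \<theta>2 w"
    unfolding a_def b_def using Zp_hom_range[OF \<theta>(1) p0 w] Zp_hom_range[OF \<theta>(2) p0 w] by auto
  have \<theta>u: "\<theta>1 u = \<theta>1 w" "\<theta>2 u = \<theta>2 w"
    unfolding u_def
    using Zp_hom_mult_pow[OF \<theta>(1) V pow_in_V[OF v(1)] v(2), of a b] Zp_hom_mult_pow[OF \<theta>(2) V pow_in_V[OF v(1)] v(2), of a b]
      Zp_hom_pow[OF \<theta>(1) V v(1), of a] Zp_hom_pow[OF \<theta>(2) V v(1), of a] v(3-6) ab
      Zp_hom_mod[OF \<theta>(1) p0 w] Zp_hom_mod[OF \<theta>(2) p0 w]
    by simp_all
  define t where "t = inv u \<otimes> w"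
  have iu: "inv u \<in> V" using subgroup.m_inv_closed[OF V u] .
  have "\<theta>1 t = 0" "\<theta>2 t = 0"
    unfolding t_def using Zp_hom_mult[OF \<theta>(1) iu w] Zp_hom_mult[OF \<theta>(2) iu w]
      Zp_hom_inv[OF \<theta>(1) V u] Zp_hom_inv[OF \<theta>(2) V u] \<theta>u
    by (simp_all add: mod_add_left_eq)
  then have "t \<in> T"
    using \<theta>_kernel subgroup.m_closed[OF V iu w] unfolding t_def by blast
  moreover have "w = u \<otimes> t"
    unfolding t_def using u w V_sub by (simp add: m_assoc[symmetric] subsetD)
  ultimately show ?thesis
    using that unfolding u_def by blast
qed

lemma commutator_expand_right:
  assumes x: "x \<in> V" and y: "y1 \<in> V" "y2 \<in> V" and t: "t \<in> T"
  shows "commutator x (y1 [^] (a::nat) \<otimes> y2 [^] (b::nat) \<otimes> t) = commutator x y1 [^] a \<otimes> commutator x y2 [^] b"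
proof -
  have tV: "t \<in> V" using t T(2) by blast
  have "commutator x (y1 [^] a \<otimes> y2 [^] b \<otimes> t) = commutator x (y1 [^] a) \<otimes> commutator x (y2 [^] b)"
    using commutator_mult_right_V[OF x _ tV] commutator_mult_right_V[OF x pow_in_V pow_in_V] y
      commutator_T[OF t x] pow_in_V subgroup.m_closed[OF V] x y V_sub
    by (simp add: subsetD)
  then show ?thesis
    using commutator_pow_right_V x y by simp
qed

lemma commutator_expand_left:
  assumes w: "w \<in> V" and y: "y1 \<in> V" "y2 \<in> V" and t: "t \<in> T"
  shows "commutator (y1 [^] (a::nat) \<otimes> y2 [^] (b::nat) \<otimes> t) w = commutator y1 w [^] a \<otimes> commutator y2 w [^] b"
proof -
  have tV: "t \<in> V" using t T(2) by blast
  have "commutator (y1 [^] a \<otimes> y2 [^] b \<otimes> t) w = commutator (y1 [^] a) w \<otimes> commutator (y2 [^] b) w"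
    using commutator_mult_left_V[OF _ tV w] commutator_mult_left_V[OF pow_in_V pow_in_V w] y
      commutator_T[OF t w] pow_in_V subgroup.m_closed[OF V] w y V_sub
    by (simp add: subsetD)
  then show ?thesis
    using commutator_pow_left_V w y by simp
qed

lemma card_derived_le: "card (derived S V) \<le> p"
proof -
  obtain v1 v2 where v: "v1 \<in> V" "v2 \<in> V" "\<theta>1 v1 = 1" "\<theta>2 v1 = 0" "\<theta>1 v2 = 0" "\<theta>2 v2 = 1"
    using basis .
  have vc: "v1 \<in> carrier S" "v2 \<in> carrier S" using v V_sub by auto
  define c where "c = commutator v1 v2"
  have c: "c \<in> carrier S" unfolding c_def using vc by simp
  have "commutator u w \<in> generate S {c}" if u: "u \<in> V" and w: "w \<in> V" for u w
  proof -
    obtain t a b where t: "t \<in> T" "u = v1 [^] (a::nat) \<otimes> v2 [^] (b::nat) \<otimes> t"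
      by (rule V_basis_decomp[OF v u])
    obtain t' a' b' where t': "t' \<in> T" "w = v1 [^] (a'::nat) \<otimes> v2 [^] (b'::nat) \<otimes> t'"
      by (rule V_basis_decomp[OF v w])
    have "commutator v1 w = c [^] b'" "commutator v2 w = inv c [^] a'"
      using commutator_expand_right[OF v(1) v(1,2) t'(1)] commutator_expand_right[OF v(2) v(1,2) t'(1)]
        commutator_self commutator_swap[OF vc] vc t'(2) unfolding c_def by simp_all
    then have "commutator u w = (c [^] b') [^] a \<otimes> (inv c [^] a') [^] b"
      using commutator_expand_left[OF w v(1,2) t(1)] t(2) by simp
    moreover have "c \<in> generate S {c}" "inv c \<in> generate S {c}"
      using generate.incl[of c "{c}" S] generate_m_inv_closed[of "{c}"] c by auto
    ultimately show ?thesis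
      using subgroup_int_pow_closed[OF generate_is_subgroup, of "{c}"] subgroup.m_closed[OF generate_is_subgroup]
        c by (simp add: int_pow_int[symmetric] nat_pow_pow)
  qed
  then have "derived S V \<subseteq> generate S {c}"
    unfolding derived_def derived_set_eq using c
    by (intro generate_subgroup_incl[OF _ generate_is_subgroup]) auto
  moreover have "\<theta>1 (v1 [^] p) = 0" "\<theta>2 (v1 [^] p) = 0"
    using Zp_hom_pow[OF \<theta>(1) V v(1), of p] Zp_hom_pow[OF \<theta>(2) V v(1), of p] v(3,4) by simp_all
  then have "v1 [^] p \<in> T"
    using \<theta>_kernel[OF pow_in_V[OF v(1)]] by blast
  then have "c [^] p = \<one>"
    using commutator_pow_left_V[OF v(1,2), of p] commutator_T[OF _ v(2)] unfolding c_def by simp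
  then have "ord c \<le> p"
    using pow_eq_id[OF c] p_gt_1 by (simp add: dvd_imp_le)
  moreover have "card (generate S {c}) = ord c"
    using generate_pow_card[OF c] by simp
  moreover have "finite (generate S {c})"
    using finite_subset[OF generate_incl finite] c by simp
  ultimately show ?thesis
    using card_mono by (metis order_trans)
qed

lemma \<alpha>_V: "v \<in> V \<Longrightarrow> \<alpha> v \<in> V"
  using hom_in_carrier[OF \<alpha>] by simp

lemma \<alpha>_mult: "v \<in> V \<Longrightarrow> w \<in> V \<Longrightarrow> \<alpha> (v \<otimes> w) = \<alpha> v \<otimes> \<alpha> w"
  using hom_mult[OF \<alpha>] by simp

lemma mult_\<alpha>_in_T:
  assumes v: "v \<in> V"
  shows "v \<otimes> \<alpha> v \<in> T"
proof -
  have "\<theta>1 (v \<otimes> \<alpha> v) = 0" "\<theta>2 (v \<otimes> \<alpha> v) = 0"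
    using Zp_hom_mult[OF \<theta>(1) v \<alpha>_V[OF v]] Zp_hom_mult[OF \<theta>(2) v \<alpha>_V[OF v]] \<alpha>_inverts[OF v]
    by (simp_all add: mod_add_right_eq)
  then show ?thesis
    using \<theta>_kernel[OF subgroup.m_closed[OF V v \<alpha>_V[OF v]]] by blast
qed

lemma extend_through_\<alpha>:
  assumes k: "k \<in> Zp_hom p S T" and k_derived: "\<forall>d \<in> derived S V. k d = 0"
  shows "(\<lambda>v. k (v \<otimes> \<alpha> v)) \<in> Zp_hom p S V"
proof (rule Zp_homI)
  show p0: "0 < p" using p_gt_1 by simp
  show "k (v \<otimes> \<alpha> v) \<in> {0..<int p}" if "v \<in> V" for v
    using Zp_hom_range[OF k p0 mult_\<alpha>_in_T[OF that]] by simp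
  fix v w assume vw: "v \<in> V" "w \<in> V"
  define d where "d = commutator w (\<alpha> v)"
  have c: "v \<in> carrier S" "w \<in> carrier S" "\<alpha> v \<in> carrier S" "\<alpha> w \<in> carrier S"
    using vw \<alpha>_V V_sub by auto
  have d: "d \<in> T" "d \<in> derived S V" "d \<in> carrier S"
    unfolding d_def using commutator_in_T[OF vw(2) \<alpha>_V[OF vw(1)]] vw \<alpha>_V T_sub
    by (auto simp: derived_def derived_set_eq intro: generate.incl)
  have "v \<otimes> w \<otimes> \<alpha> (v \<otimes> w) = v \<otimes> ((w \<otimes> \<alpha> v) \<otimes> \<alpha> w)"
    using \<alpha>_mult[OF vw] c by (simp add: m_assoc)
  also have "w \<otimes> \<alpha> v = d \<otimes> (\<alpha> v \<otimes> w)"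
    unfolding d_def commutator_def using c by (simp add: m_assoc)
  also have "v \<otimes> (d \<otimes> (\<alpha> v \<otimes> w) \<otimes> \<alpha> w) = (v \<otimes> d) \<otimes> (\<alpha> v \<otimes> (w \<otimes> \<alpha> w))"
    using c d by (simp add: m_assoc)
  also have "v \<otimes> d = d \<otimes> v"
    using T_central[OF d(1) vw(1)] by simp
  also have "d \<otimes> v \<otimes> (\<alpha> v \<otimes> (w \<otimes> \<alpha> w)) = d \<otimes> ((v \<otimes> \<alpha> v) \<otimes> (w \<otimes> \<alpha> w))"
    using c d by (simp add: m_assoc)
  finally have eq: "v \<otimes> w \<otimes> \<alpha> (v \<otimes> w) = d \<otimes> ((v \<otimes> \<alpha> v) \<otimes> (w \<otimes> \<alpha> w))" .
  have x: "(v \<otimes> \<alpha> v) \<otimes> (w \<otimes> \<alpha> w) \<in> T"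
    using subgroup.m_closed[OF T(1) mult_\<alpha>_in_T mult_\<alpha>_in_T] vw by blast
  show "k (v \<otimes> w \<otimes> \<alpha> (v \<otimes> w)) = (k (v \<otimes> \<alpha> v) + k (w \<otimes> \<alpha> w)) mod int p"
    unfolding eq using Zp_hom_mult[OF k d(1) x] Zp_hom_mult[OF k mult_\<alpha>_in_T mult_\<alpha>_in_T] vw
      k_derived d(2) Zp_hom_mod[OF k p0 x] by simp
qed

lemma T_mod_derived_cyclic: "\<exists>t \<in> T. \<forall>x \<in> T. \<exists>n::nat. x \<in> derived S V #> t [^] n"
proof -
  define D where "D = derived S V"
  have D: "subgroup D S" "D \<subseteq> T"
    unfolding D_def using derived_is_subgroup[OF V_sub] derived_subset_T by auto
  define e where "e = (p + 1) div 2"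
  have e: "e + e = p + 1"
    unfolding e_def using p(2) by presburger
  have pow_e: "k (t [^] e \<otimes> \<alpha> (t [^] e)) = k t" if k: "k \<in> Zp_hom p S T" and t: "t \<in> T" for k t
  proof -
    have te: "t [^] e \<in> T"
      using subgroup_int_pow_closed[OF T(1) t, of "int e"] by (simp add: int_pow_int)
    have "t \<in> carrier S" using t T_sub by blast
    then have "t [^] e \<otimes> \<alpha> (t [^] e) = t [^] (p + 1)"
      using \<alpha>_T[OF te] nat_pow_mult[of t e e] e by simp
    moreover have "int (p + 1) * k t mod int p = k t"
      using Zp_hom_mod[OF k _ t] p_gt_1 by (simp add: distrib_right mod_add_left_eq)
    ultimately show ?thesis
      using Zp_hom_pow[OF k T(1) t, of "p + 1"] by simp
  qed
  have "\<exists>g \<in> T. generate S (insert g D) = T"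
  proof (rule quotient_of_T_cyclic[OF D])
    show "t [^] e \<in> T" if "t \<in> T" for t
      using subgroup_nat_pow_closed[OF T(1) that] .
    show "\<exists>\<chi> \<in> Zp_hom p S V. \<forall>t \<in> T. \<chi> (t [^] e) = k t"
      if "k \<in> Zp_hom p S T" "\<forall>h \<in> D. k h = 0" for k
      using extend_through_\<alpha>[OF that[unfolded D_def]] by (rule bexI[rotated]) (simp add: pow_e that(1))
  qed
  then obtain g where g: "g \<in> T" "generate S (insert g D) = T"
    by blast
  have gc: "g \<in> carrier S" using g(1) T_sub by blast
  have D_carrier: "D \<subseteq> carrier S" using D(2) T_sub by blast
  have "g \<in> normalizer S D"
  proof (rule normalizerI[OF gc D(1) finite_subset[OF D_carrier finite]])
    fix d assume d: "d \<in> D"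
    then have "g \<otimes> d = d \<otimes> g" using T_abelian g(1) D(2) by blast
    then show "g \<otimes> d \<otimes> inv g \<in> D"
      using d gc D_carrier by (simp add: m_assoc subsetD)
  qed
  then have "subgroup {g [^] (i::int) \<otimes> d | i d. d \<in> D} S"
    by (rule powers_mult_subgroup[OF D(1)])
  moreover have "insert g D \<subseteq> {g [^] (i::int) \<otimes> d | i d. d \<in> D}"
  proof
    fix x assume "x \<in> insert g D"
    then have "x = g [^] (1::int) \<otimes> \<one> \<and> \<one> \<in> D \<or> x = g [^] (0::int) \<otimes> x \<and> x \<in> D"
      using gc D_carrier subgroup.one_closed[OF D(1)] by auto
    then show "x \<in> {g [^] (i::int) \<otimes> d | i d. d \<in> D}" by blast
  qed
  ultimately have T_powers: "T \<subseteq> {g [^] (i::int) \<otimes> d | i d. d \<in> D}"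
    using g(2) generate_subgroup_incl by blast
  have "\<exists>n::nat. x \<in> D #> g [^] n" if x: "x \<in> T" for x
  proof -
    obtain i d where d: "d \<in> D" "x = g [^] (i::int) \<otimes> d"
      using T_powers x by blast
    have "g [^] i \<in> generate S {g}"
      using generate_pow[OF gc] by blast
    then obtain n :: nat where n: "g [^] i = g [^] n"
      using generate_pow_on_finite_carrier[OF finite gc] by blast
    have "g [^] n \<otimes> d = d \<otimes> g [^] n"
      using T_abelian subgroup_nat_pow_closed[OF T(1) g(1)] d(1) D(2) by blast
    then have "x \<in> D #> g [^] n"
      using d n unfolding r_coset_def by auto
    then show ?thesis by blast
  qed
  then show ?thesis
    using g(1) unfolding D_def by blast
qed

end

lemma minus_one_SL2: "1 < p \<Longrightarrow> (int p - 1, 0, 0, int p - 1) \<in> carrier (SL2 p)"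
proof -
  assume p: "1 < p"
  have "(int p - 1) * (int p - 1) - 0 * 0 = 1 + int p * (int p - 2)"
    by (simp add: algebra_simps)
  then have "((int p - 1) * (int p - 1) - 0 * 0) mod int p = 1"
    using p by simp
  then show ?thesis
    unfolding SL2_def using p by simp
qed

lemma natural_SL2_module_minus_one:
  assumes nat: "natural_SL2_module p S G K V T" and p: "1 < p"
  obtains \<theta>1 \<theta>2 C where "\<theta>1 \<in> Zp_hom p S V" "\<theta>2 \<in> Zp_hom p S V"
    "\<And>v. v \<in> V \<Longrightarrow> \<theta>1 v = 0 \<and> \<theta>2 v = 0 \<longleftrightarrow> v \<in> T"
    "\<And>a b. a \<in> {0..<int p} \<Longrightarrow> b \<in> {0..<int p} \<Longrightarrow> \<exists>v \<in> V. \<theta>1 v = a \<and> \<theta>2 v = b"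
    "C \<in> K" "\<And>\<alpha> v. \<alpha> \<in> C \<Longrightarrow> v \<in> V \<Longrightarrow> \<theta>1 (\<alpha> v) = (- \<theta>1 v) mod int p \<and> \<theta>2 (\<alpha> v) = (- \<theta>2 v) mod int p"
proof -
  obtain \<psi> \<theta> where \<psi>: "\<psi> \<in> iso (G\<lparr>carrier := K\<rparr>) (SL2 p)"
    and \<theta>_onto: "\<theta> ` V = {0..<int p} \<times> {0..<int p}"
    and \<theta>_mult: "\<forall>v \<in> V. \<forall>w \<in> V. \<theta> (v \<otimes>\<^bsub>S\<^esub> w) = ((fst (\<theta> v) + fst (\<theta> w)) mod int p, (snd (\<theta> v) + snd (\<theta> w)) mod int p)"
    and \<theta>_kernel: "\<forall>v \<in> V. \<theta> v = (0, 0) \<longleftrightarrow> v \<in> T"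
    and \<theta>_action: "\<forall>C \<in> K. \<forall>\<alpha> \<in> C. \<forall>v \<in> V. \<theta> (\<alpha> v) = matvec p (\<psi> C) (\<theta> v)"
    using nat unfolding natural_SL2_module_def by blast
  define C where "C = inv_into K \<psi> (int p - 1, 0, 0, int p - 1)"
  have "bij_betw \<psi> K (carrier (SL2 p))"
    using \<psi> unfolding iso_def by simp
  then have C: "C \<in> K" "\<psi> C = (int p - 1, 0, 0, int p - 1)"
    unfolding C_def using minus_one_SL2[OF p] by (auto simp: bij_betw_def inv_into_into f_inv_into_f)
  have range: "fst (\<theta> v) \<in> {0..<int p}" "snd (\<theta> v) \<in> {0..<int p}" if "v \<in> V" for v
  proof -
    have "\<theta> v \<in> {0..<int p} \<times> {0..<int p}"
      using \<theta>_onto that by blast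
    then show "fst (\<theta> v) \<in> {0..<int p}" "snd (\<theta> v) \<in> {0..<int p}"
      by (simp_all add: mem_Times_iff)
  qed
  show ?thesis
  proof (rule that[of "\<lambda>v. fst (\<theta> v)" "\<lambda>v. snd (\<theta> v)" C])
    show "(\<lambda>v. fst (\<theta> v)) \<in> Zp_hom p S V" "(\<lambda>v. snd (\<theta> v)) \<in> Zp_hom p S V"
      using range \<theta>_mult p by (auto intro!: Zp_homI)
    show "fst (\<theta> v) = 0 \<and> snd (\<theta> v) = 0 \<longleftrightarrow> v \<in> T" if "v \<in> V" for v
      using \<theta>_kernel that by (cases "\<theta> v") auto
    show "\<exists>v \<in> V. fst (\<theta> v) = a \<and> snd (\<theta> v) = b" if "a \<in> {0..<int p}" "b \<in> {0..<int p}" for a b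
    proof -
      have "(a, b) \<in> \<theta> ` V" using \<theta>_onto that by blast
      then obtain v where "v \<in> V" "\<theta> v = (a, b)" by (metis imageE)
      then show ?thesis by (metis fst_conv snd_conv)
    qed
    show "C \<in> K" by (rule C(1))
    show "fst (\<theta> (\<alpha> v)) = (- fst (\<theta> v)) mod int p \<and> snd (\<theta> (\<alpha> v)) = (- snd (\<theta> v)) mod int p"
      if "\<alpha> \<in> C" "v \<in> V" for \<alpha> v
    proof -
      have neg: "(int p - 1) * x mod int p = (- x) mod int p" for x
      proof -
        have "(int p - 1) * x = - x + int p * x" by (simp add: algebra_simps)
        then show ?thesis by (simp only: mod_mult_self2)
      qed
      obtain x y where xy: "\<theta> v = (x, y)" by (cases "\<theta> v")
      have "\<theta> (\<alpha> v) = matvec p (int p - 1, 0, 0, int p - 1) (x, y)"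
        using \<theta>_action C that xy by metis
      also have "\<dots> = ((- x) mod int p, (- y) mod int p)"
        unfolding matvec_def using neg by simp
      finally show ?thesis
        using xy by simp
    qed
  qed
qed

lemma rank3_natural_module_of_core:
  fixes S :: "('a, 'b) monoid_scheme" (structure)
  assumes p: "Factorial_Ring.prime p" "odd p"
    and S: "group S" "finite (carrier S)" "\<exists>n. card (carrier S) = p ^ n"
    and F: "fusion_system S F" "subgroup E S" and T: "subgroup T S"
    and centralizes: "Out_centralizes (Opprime p (OutF S F E)) T"
    and V: "subgroup V S" "T \<subseteq> V" "V \<subseteq> E" "F_characteristic F E V" "sectional_rank_le S V 3"
      "V \<subseteq> centralizerS S E T <#> T" "natural_SL2_module p S (OutF S F E) (Opprime p (OutF S F E)) V T"
  shows "\<exists>\<theta>1 \<theta>2 \<alpha>. rank3_natural_module S p V T \<theta>1 \<theta>2 \<alpha>"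
proof -
  interpret fusion_subgroup S F E
    using S F by (simp add: fusion_subgroup_def fusion_subgroup_axioms_def)
  obtain \<theta>1 \<theta>2 C where \<theta>: "\<theta>1 \<in> Zp_hom p S V" "\<theta>2 \<in> Zp_hom p S V"
    "\<And>v. v \<in> V \<Longrightarrow> \<theta>1 v = 0 \<and> \<theta>2 v = 0 \<longleftrightarrow> v \<in> T"
    "\<And>a b. a \<in> {0..<int p} \<Longrightarrow> b \<in> {0..<int p} \<Longrightarrow> \<exists>v \<in> V. \<theta>1 v = a \<and> \<theta>2 v = b"
    and C: "C \<in> Opprime p (OutF S F E)"
      "\<And>\<alpha> v. \<alpha> \<in> C \<Longrightarrow> v \<in> V \<Longrightarrow> \<theta>1 (\<alpha> v) = (- \<theta>1 v) mod int p \<and> \<theta>2 (\<alpha> v) = (- \<theta>2 v) mod int p"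
    using natural_SL2_module_minus_one[OF V(7) prime_gt_1_nat[OF p(1)]] by blast
  obtain \<alpha> where \<alpha>: "\<alpha> \<in> C" "\<forall>t \<in> T. \<alpha> t = t"
    using centralizes C(1) unfolding Out_centralizes_def by blast
  have \<alpha>_Aut: "\<alpha> \<in> F E E"
    using mem_Opprime_OutF_imp_Aut_F[OF C(1) \<alpha>(1)] .
  have hom: "\<alpha> \<in> hom (S\<lparr>carrier := V\<rparr>) (S\<lparr>carrier := V\<rparr>)"
    using V(3,4) \<alpha>_Aut Aut_F_props(4)[OF \<alpha>_Aut] unfolding F_characteristic_def
    by (intro homI) (auto simp: subsetD)
  have rank: "rank S V \<le> 3"
    using V(1,5) unfolding sectional_rank_le_def by blast
  have cover: "V \<subseteq> centralizerS S V T <#> T"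
    using centralizer_cover_restrict[OF E_sub V(1,2,6)] .
  have order: "\<exists>n. order S = p ^ n"
    using S(3) unfolding order_def .
  have "rank3_natural_module S p V T \<theta>1 \<theta>2 \<alpha>"
    using rank3_natural_module_axioms.intro[OF S(2) p order V(1) T V(2) \<theta> rank cover hom
        \<alpha>(2)[rule_format] C(2)[OF \<alpha>(1)]]
    by (intro rank3_natural_module.intro[OF S(1)])
  then show ?thesis by blast
qed

theorem theorem2p9:
  fixes p :: nat and S :: "('a,'b) monoid_scheme"
    and F :: "'a set \<Rightarrow> 'a set \<Rightarrow> ('a \<Rightarrow> 'a) set"
    and E1 E2 T V :: "'a set"
  assumes p: "Factorial_Ring.prime p" "odd p"
    and S: "group S" "finite (carrier S)" "\<exists>n. card (carrier S) = p ^ n"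
    and sat: "saturated_fusion_system p S F"
    and E: "essential p S F E1" "essential p S F E2" "E1 \<noteq> E2"
           "normalizerS S E1 = normalizerS S E2"
    and T: "is_core S F E1 E2 T"
    and rk: "rank S E1 \<le> 3" "rank S E2 \<le> 3" "rank S T \<le> 3"
    and SL: "(OutF S F E1)\<lparr>carrier := Opprime p (OutF S F E1)\<rparr> \<cong> SL2 p"
            "Out_centralizes (Opprime p (OutF S F E1)) T"
    and V: "subgroup V S \<and> T \<subseteq> V \<and> V \<subseteq> E1 \<and> F_characteristic F E1 V \<and>
              sectional_rank_le S V 3 \<and> V \<subseteq> centralizerS S E1 T <#>\<^bsub>S\<^esub> T \<and>
              natural_SL2_module p S (OutF S F E1) (Opprime p (OutF S F E1)) V T"
  shows "(\<forall>x\<in>T. \<forall>y\<in>T. x \<otimes>\<^bsub>S\<^esub> y = y \<otimes>\<^bsub>S\<^esub> x) \<and>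
           (\<forall>t\<in>T. \<forall>v\<in>V. t \<otimes>\<^bsub>S\<^esub> v = v \<otimes>\<^bsub>S\<^esub> t) \<and>
           card (derived S V) \<le> p \<and>
           derived S V \<subseteq> T \<and>
           (\<exists>t\<in>T. \<forall>x\<in>T. \<exists>n::nat. x \<in> derived S V #>\<^bsub>S\<^esub> (t [^]\<^bsub>S\<^esub> n))"
proof -
  have "fusion_system S F" "subgroup E1 S" "subgroup T S"
    using sat E(1) T unfolding saturated_fusion_system_def essential_def is_core_def core_cond_def
    by blast+
  then obtain \<theta>1 \<theta>2 \<alpha> where "rank3_natural_module S p V T \<theta>1 \<theta>2 \<alpha>"
    using rank3_natural_module_of_core[OF p S _ _ _ SL(2)] V by blast
  then interpret rank3_natural_module S p V T \<theta>1 \<theta>2 \<alpha> .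
  show ?thesis
    using T_abelian T_central card_derived_le derived_subset_T T_mod_derived_cyclic by blast
qed

end
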